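(* Let $\|\cdot\|$ be a strictly convex norm on $\mathbb R^2$ that is $C^1$ on $\mathbb R^2\setminus\{0\}$. There exist an odd function $\varphi\in BV(\mathbb R/2\pi\mathbb Z)$ and a constant $c>0$ (depending only on $\mathsf B$) such that $\Delta_\varphi(m_1,m_2)\ge c\,\Lambda(m_1,m_2)$ for all $m_1,m_2\in\mathbb S^1$.
   Context: $\mathsf B=\{\|z\|<1\}$ normalized so that $\partial\mathsf B$ has length $2\pi$; $\gamma$ is its counterclockwise arc-length parametrization; $\mathbb R^2\cong\mathbb C$; $a\wedge b=a_1b_2-a_2b_1$. For odd $\varphi\in BV(\mathbb R/2\pi\mathbb Z)$, \[\Delta_\varphi(e^{i\theta_1},e^{i\theta_2})=\iint_{(\mathbb R/2\pi\mathbb Z)^2}\varphi(t-s)\,\gamma'(s-\tfrac\pi2)\wedge\gamma'(t-\tfrac\pi2)\big(\mathbf 1_{e^{is}\cdot e^{i\theta_2}>0}-\mathbf 1_{e^{is}\cdot e^{i\theta_1}>0}\big)\big(\mathbf 1_{e^{it}\cdot e^{i\theta_2}>0}-\mathbf 1_{e^{it}\cdot e^{i\theta_1}>0}\big)\,dt\,ds.\] $\alpha$ is continuous with $\gamma'=e^{i\alpha}$, and $\Lambda(e^{i\theta_1},e^{i\theta_2})=\int_{\theta_1}^{\theta_2}\int_{\theta_1}^{\theta_2}|\alpha(t)-\alpha(s)|\,dt\,ds$ for $|\theta_1-\theta_2|\le\pi$. *)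

theory Defs
  imports "HOL-Complex_Analysis.Complex_Analysis"
begin

definition wedge :: "complex \<Rightarrow> complex \<Rightarrow> real" where
  "wedge a b = Re a * Im b - Im a * Re b"

definition is_norm2 :: "(complex \<Rightarrow> real) \<Rightarrow> bool" where
  "is_norm2 N \<longleftrightarrow> (\<forall>x. 0 \<le> N x) \<and> (\<forall>x. N x = 0 \<longleftrightarrow> x = 0)
     \<and> (\<forall>(r::real) x. N (of_real r * x) = \<bar>r\<bar> * N x)
     \<and> (\<forall>x y. N (x + y) \<le> N x + N y)"

definition strictly_convex_norm :: "(complex \<Rightarrow> real) \<Rightarrow> bool" where
  "strictly_convex_norm N \<longleftrightarrow>
     (\<forall>x y (t::real). N x = 1 \<and> N y = 1 \<and> x \<noteq> y \<and> 0 < t \<and> t < 1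
        \<longrightarrow> N (of_real (1 - t) * x + of_real t * y) < 1)"

definition C1_off_origin :: "(complex \<Rightarrow> real) \<Rightarrow> bool" where
  "C1_off_origin N \<longleftrightarrow>
     (\<exists>D :: complex \<Rightarrow> (complex \<Rightarrow>\<^sub>L real).
        (\<forall>x. x \<noteq> 0 \<longrightarrow> (N has_derivative blinfun_apply (D x)) (at x))
        \<and> continuous_on (- {0}) D)"

definition bv_on :: "(real \<Rightarrow> real) \<Rightarrow> real \<Rightarrow> real \<Rightarrow> bool" where
  "bv_on f a b \<longleftrightarrow> (\<exists>M. \<forall>(n::nat) (x::nat \<Rightarrow> real).
      (\<forall>i\<le>n. a \<le> x i \<and> x i \<le> b) \<and> (\<forall>i<n. x i \<le> x (Suc i))
      \<longrightarrow> (\<Sum>i<n. \<bar>f (x (Suc i)) - f (x i)\<bar>) \<le> M)"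

text \<open>Delta_phi(e^{i th1}, e^{i th2}); the torus (R/2piZ)^2 is represented by [0,2pi]^2,
  and gamma'(u) = cis (alpha u).\<close>
definition Delta :: "(real \<Rightarrow> real) \<Rightarrow> (real \<Rightarrow> real) \<Rightarrow> real \<Rightarrow> real \<Rightarrow> real" where
  "Delta \<phi> \<alpha> \<theta>1 \<theta>2 = integral ({0..2*pi} \<times> {0..2*pi})
     (\<lambda>(s, t). \<phi> (t - s) * wedge (cis (\<alpha> (s - pi/2))) (cis (\<alpha> (t - pi/2)))
        * ((if cis s \<bullet> cis \<theta>2 > 0 then 1 else 0) - (if cis s \<bullet> cis \<theta>1 > 0 then 1 else 0))
        * ((if cis t \<bullet> cis \<theta>2 > 0 then 1 else 0) - (if cis t \<bullet> cis \<theta>1 > 0 then 1 else 0)))"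

text \<open>Lambda(e^{i th1}, e^{i th2}) for |th1 - th2| <= pi.\<close>
definition Lambda :: "(real \<Rightarrow> real) \<Rightarrow> real \<Rightarrow> real \<Rightarrow> real" where
  "Lambda \<alpha> \<theta>1 \<theta>2 = integral ({min \<theta>1 \<theta>2..max \<theta>1 \<theta>2} \<times> {min \<theta>1 \<theta>2..max \<theta>1 \<theta>2})
     (\<lambda>(s, t). \<bar>\<alpha> t - \<alpha> s\<bar>)"

end

theory Submission
  imports Defs
begin

text \<open>
  Because the norm is differentiable and strictly convex, the tangent direction determines the
  point of the unit sphere; hence the tangent angle \<open>\<alpha>\<close>, after multiplication by a sign \<open>\<epsilon>\<close>,
  is strictly increasing with \<open>\<alpha> (u + 2\<pi>) = \<alpha> u + 2\<pi>k\<close>.  We take \<open>\<phi> = \<epsilon>\<close> times the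
  indicator of \<open>(0, \<eta>)\<close> minus that of \<open>(-\<eta>, 0)\<close> for a small \<open>\<eta>\<close>.  Substituting \<open>t = s + x\<close>
  turns \<open>\<Delta>\<^sub>\<phi>\<close> into \<open>2 \<integral>\<^sub>0\<^sup>\<eta> J\<close>, where \<open>J x\<close> correlates the indicator of the arc at \<open>s\<close>
  and at \<open>s + x\<close> with weight \<open>sin (\<alpha> (s + x) - \<alpha> s)\<close>.  For small \<open>x\<close> this weight is
  comparable to the increment of \<open>\<alpha>\<close>, which bounds \<open>J\<close> from below by increments of an
  antiderivative of \<open>\<alpha>\<close>; an error term appears only for almost antipodal arcs, whose length
  absorbs it.  Integrating, arcs shorter than \<open>\<eta>\<close> give \<open>\<Delta>\<^sub>\<phi> \<ge> \<Lambda>/2\<close>, while longer arcs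
  give a uniform positive lower bound, which dominates \<open>\<Lambda> \<le> \<pi>\<^sup>2 sup (\<alpha> (u + \<pi>) - \<alpha> u)\<close>.
\<close>

section \<open>Supporting functionals of a differentiable norm\<close>

lemma is_norm2D:
  assumes "is_norm2 N"
  shows "N 0 = 0" "\<And>x. 0 \<le> N x" "\<And>r x. N (r *\<^sub>R x) = \<bar>r\<bar> * N x"
    "\<And>x y. N (x + y) \<le> N x + N y"
  using assms unfolding is_norm2_def scaleR_conv_of_real by auto

lemma is_norm2_convex:
  assumes "is_norm2 N" "0 \<le> t" "t \<le> 1"
  shows "N ((1 - t) *\<^sub>R x + t *\<^sub>R y) \<le> (1 - t) * N x + t * N y"
proof -
  have "N ((1 - t) *\<^sub>R x + t *\<^sub>R y) \<le> N ((1 - t) *\<^sub>R x) + N (t *\<^sub>R y)"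
    using is_norm2D(4)[OF assms(1)] by blast
  also have "\<dots> = (1 - t) * N x + t * N y"
    using is_norm2D(3)[OF assms(1)] assms(2,3) by simp
  finally show ?thesis .
qed

lemma DERIV_le_of_right_slopes_le:
  fixes h :: "real \<Rightarrow> real"
  assumes "(h has_real_derivative L) (at 0)"
    and "\<And>t. 0 < t \<Longrightarrow> t \<le> 1 \<Longrightarrow> h t - h 0 \<le> t * K"
  shows "L \<le> K"
proof -
  have "((\<lambda>y. (h y - h 0) / (y - 0)) \<longlongrightarrow> L) (at 0)"
    using assms(1) has_field_derivative_iff by blast
  then have lim: "((\<lambda>y. (h y - h 0) / y) \<longlongrightarrow> L) (at_right 0)"
    by (simp add: filterlim_at_split)
  have "eventually (\<lambda>y. y \<in> {0<..<1}) (at_right (0::real))"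
    by (rule eventually_at_right_real) simp
  then have "eventually (\<lambda>y. (h y - h 0) / y \<le> K) (at_right (0::real))"
    by eventually_elim (use assms(2) in \<open>auto simp: divide_le_eq mult.commute\<close>)
  then show ?thesis
    by (rule tendsto_le[OF trivial_limit_at_right_real tendsto_const lim])
qed

lemma is_norm2_subgradient:
  assumes N: "is_norm2 N" and d: "(N has_derivative l) (at p)"
  shows "N p + l (z - p) \<le> N z"
proof -
  have lin: "linear l" using d has_derivative_linear by blast
  define h where "h t = N (p + t *\<^sub>R (z - p))" for t :: real
  have "((\<lambda>t::real. p + t *\<^sub>R (z - p)) has_derivative (\<lambda>t. t *\<^sub>R (z - p))) (at 0)"
    by (auto intro!: derivative_eq_intros)
  from diff_chain_at[OF this] d
  have "(h has_derivative (\<lambda>t. l (t *\<^sub>R (z - p)))) (at 0)"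
    unfolding h_def by (simp add: o_def)
  moreover have "(\<lambda>t. l (t *\<^sub>R (z - p))) = (*) (l (z - p))"
    using lin by (auto simp: linear_scale)
  ultimately have "(h has_real_derivative l (z - p)) (at 0)"
    by (simp add: has_field_derivative_def)
  moreover have "h t - h 0 \<le> t * (N z - N p)" if "0 < t" "t \<le> 1" for t
  proof -
    have "p + t *\<^sub>R (z - p) = (1 - t) *\<^sub>R p + t *\<^sub>R z" by (simp add: algebra_simps)
    then have "h t \<le> (1 - t) * N p + t * N z"
      unfolding h_def using is_norm2_convex[OF N, of t p z] that by simp
    then show ?thesis unfolding h_def by (simp add: algebra_simps)
  qed
  ultimately have "l (z - p) \<le> N z - N p" by (rule DERIV_le_of_right_slopes_le)
  then show ?thesis by simp
qed

lemma is_norm2_derivative_supports: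
  assumes N: "is_norm2 N" and d: "(N has_derivative l) (at p)" and p1: "N p = 1"
  shows "l p = 1" "\<And>z. l z \<le> N z"
proof -
  have lin: "linear l" using d has_derivative_linear by blast
  have "N p + l (0 - p) \<le> N 0" "N p + l (2 *\<^sub>R p - p) \<le> N (2 *\<^sub>R p)"
    by (rule is_norm2_subgradient[OF N d])+
  moreover have "l (0 - p) = - l p" "l (2 *\<^sub>R p - p) = l p"
    using lin by (simp_all add: linear_diff linear_neg scaleR_2)
  ultimately show lp: "l p = 1" using p1 is_norm2D[OF N] by simp
  fix z
  have "N p + l (z - p) \<le> N z" by (rule is_norm2_subgradient[OF N d])
  then show "l z \<le> N z" using lin lp p1 by (simp add: linear_diff)
qed

lemma strictly_convex_support_point_unique:
  assumes N: "is_norm2 N" and sc: "strictly_convex_norm N" and d: "(N has_derivative l) (at p)"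
    and p1: "N p = 1" and q1: "N q = 1" and lq: "l q = 1"
  shows "q = p"
proof (rule ccontr)
  assume "q \<noteq> p"
  define m where "m = of_real (1 - 1/2) * p + of_real (1/2) * q"
  have "N m < 1"
    using sc[unfolded strictly_convex_norm_def, rule_format, of p q "1/2"] \<open>q \<noteq> p\<close> p1 q1
    unfolding m_def by auto
  moreover have "l m = 1"
  proof -
    have "m = (1/2) *\<^sub>R p + (1/2) *\<^sub>R q" unfolding m_def by (simp add: scaleR_conv_of_real)
    then show ?thesis
      using has_derivative_linear[OF d] lq is_norm2_derivative_supports(1)[OF N d p1]
      by (simp add: linear_add linear_scale)
  qed
  moreover have "l m \<le> N m" by (rule is_norm2_derivative_supports(2)[OF N d p1])
  ultimately show False by linarith
qed

lemma linear_eq_wedge_if_vanishing: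
  fixes l :: "complex \<Rightarrow> real"
  assumes lin: "linear l" and g: "norm g = 1" and lg: "l g = 0"
  shows "l z = l (\<i> * g) * wedge g z"
proof -
  define c where "c = Re g * Re z + Im g * Im z"
  have gsq: "(Re g)\<^sup>2 + (Im g)\<^sup>2 = 1" using g unfolding cmod_def by simp
  have "z = c *\<^sub>R g + wedge g z *\<^sub>R (\<i> * g)"
  proof (rule complex_eqI)
    have "c * Re g - wedge g z * Im g = Re z * ((Re g)\<^sup>2 + (Im g)\<^sup>2)"
      unfolding c_def wedge_def power2_eq_square by algebra
    then show "Re z = Re (c *\<^sub>R g + wedge g z *\<^sub>R (\<i> * g))" using gsq by simp
    have "c * Im g + wedge g z * Re g = Im z * ((Re g)\<^sup>2 + (Im g)\<^sup>2)"
      unfolding c_def wedge_def power2_eq_square by algebra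
    then show "Im z = Im (c *\<^sub>R g + wedge g z *\<^sub>R (\<i> * g))" using gsq by simp
  qed
  then have "l z = c * l g + wedge g z * l (\<i> * g)"
    by (metis linear_add[OF lin] linear_scale[OF lin] real_scaleR_def)
  then show ?thesis using lg by simp
qed

section \<open>Real analysis\<close>

lemma abs_mult_le_of_abs_le_one: "\<bar>a\<bar> \<le> B \<Longrightarrow> \<bar>b\<bar> \<le> 1 \<Longrightarrow> \<bar>a * b :: real\<bar> \<le> B"
  by (metis abs_ge_zero abs_mult mult_left_le order.trans)

lemma continuous_nonvanishing_same_sign:
  fixes f :: "'a::topological_space \<Rightarrow> real"
  assumes "continuous_on S f" "connected S" "\<And>x. x \<in> S \<Longrightarrow> f x \<noteq> 0" "x \<in> S" "y \<in> S"
  shows "f x * f y > 0"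
proof (rule ccontr)
  assume "\<not> f x * f y > 0"
  then have "(f x < 0 \<and> 0 < f y) \<or> (f y < 0 \<and> 0 < f x)"
    using assms(3)[OF assms(4)] assms(3)[OF assms(5)] by (auto simp: zero_less_mult_iff)
  moreover have "connected (f ` S)" by (rule connected_continuous_image[OF assms(1,2)])
  ultimately have "0 \<in> f ` S"
    using assms(4,5) unfolding connected_iff_interval by (metis image_eqI less_le)
  then show False using assms(3) by auto
qed

lemma strict_mono_if_locally_strict_mono:
  fixes f :: "real \<Rightarrow> real"
  assumes loc: "\<And>a b. a < b \<Longrightarrow> b < a + c \<Longrightarrow> f a < f b" and c: "c > 0"
  shows "strict_mono f"
proof -
  have steps: "a < b \<Longrightarrow> b < a + real n * (c/2) \<Longrightarrow> f a < f b" for n a b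
  proof (induction n arbitrary: a)
    case 0 then show ?case by simp
  next
    case (Suc n)
    show ?case
    proof (cases "b < a + c")
      case True then show ?thesis using loc Suc.prems by blast
    next
      case False
      then have "f (a + c/2) < f b" using Suc c by (intro Suc.IH) (auto simp: field_simps)
      moreover have "f a < f (a + c/2)" using loc c by simp
      ultimately show ?thesis by simp
    qed
  qed
  show ?thesis
  proof (rule strict_monoI)
    fix a b :: real assume "a < b"
    obtain n where "(b - a) / (c/2) < real n" using reals_Archimedean2 by blast
    then have "b < a + real n * (c/2)" using c by (simp add: field_simps)
    then show "f a < f b" using steps \<open>a < b\<close> by blast
  qed
qed

lemma periodic_plus_of_int:
  fixes p :: "real \<Rightarrow> 'b"
  assumes "\<And>x. p (x + T) = p x"
  shows "p (x + of_int k * T) = p x"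
proof -
  interpret periodic_fun_simple p T by standard (rule assms)
  show ?thesis by (rule plus_of_int)
qed

lemma periodic_reduce_to_period:
  fixes p :: "real \<Rightarrow> 'b"
  assumes per: "\<And>x. p (x + T) = p x" and T: "0 < T"
  shows "\<exists>u'\<in>{0..T}. p u = p u'"
proof -
  define k where "k = \<lfloor>u / T\<rfloor>"
  have "of_int k \<le> u / T" "u / T < of_int k + 1" unfolding k_def by linarith+
  then have "u - of_int k * T \<in> {0..T}" using T by (simp add: field_simps)
  moreover have "p u = p ((u - of_int k * T) + of_int k * T)" by simp
  ultimately show ?thesis using periodic_plus_of_int[where p=p, OF per] by metis
qed

lemma integral_periodic_translate:
  fixes p :: "real \<Rightarrow> real"
  assumes per: "\<And>x. p (x + T) = p x" and int: "\<And>a b. p integrable_on {a..b}" and T: "0 < T"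
  shows "integral {c..c+T} p = integral {0..T} p"
proof -
  have base: "integral {c'..c'+T} p = integral {0..T} p" if c': "0 \<le> c'" "c' \<le> T" for c'
  proof -
    have "integral {c'..c'+T} p = integral {c'..T} p + integral {T..c'+T} p"
      using Henstock_Kurzweil_Integration.integral_combine[where a=c' and c=T and b="c'+T" and f=p] c' int by simp
    moreover have "integral {T..c'+T} p = integral {0..c'} p"
      using integral_shift_real_ivl[where a=T and b="c' + T" and f=p and c=T] per by simp
    moreover have "integral {0..c'} p + integral {c'..T} p = integral {0..T} p"
      using Henstock_Kurzweil_Integration.integral_combine[where a=0 and c=c' and b=T and f=p] c' int by simp
    ultimately show ?thesis by simp
  qed
  define k where "k = \<lfloor>c / T\<rfloor>"
  define c' where "c' = c - of_int k * T"
  have "of_int k \<le> c / T" "c / T < of_int k + 1" unfolding k_def by linarith+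
  then have c': "0 \<le> c'" "c' \<le> T" using T unfolding c'_def by (simp_all add: field_simps)
  have "integral {c..c+T} p = integral {c'..c'+T} (\<lambda>x. p (x + of_int k * T))"
    using integral_shift_real_ivl[where a=c and b="c+T" and f=p and c="of_int k * T"] unfolding c'_def
    by (simp add: algebra_simps)
  also have "\<dots> = integral {c'..c'+T} p" using periodic_plus_of_int[where p=p, OF per] by simp
  also have "\<dots> = integral {0..T} p" by (rule base[OF c'])
  finally show ?thesis .
qed

lemma bounded_borel_set_integrable:
  fixes f :: "'a::euclidean_space \<Rightarrow> real"
  assumes [measurable]: "f \<in> borel_measurable borel" and bnd: "\<And>x. \<bar>f x\<bar> \<le> B"
  shows "set_integrable lborel (cbox a b) f"
  unfolding set_integrable_def
proof (rule integrableI_bounded_set_indicator[where B=B])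
  show "emeasure lborel (cbox a b) < \<infinity>" by (rule emeasure_lborel_cbox_finite)
qed (auto simp: bnd)

lemma bounded_borel_integrable_on:
  fixes f :: "real \<Rightarrow> real"
  assumes "f \<in> borel_measurable borel" and "\<And>x. \<bar>f x\<bar> \<le> B"
  shows "f integrable_on {a..b}"
  using set_borel_integral_eq_integral(1)[OF bounded_borel_set_integrable[OF assms, of a b]] by simp

lemma bounded_borel_integral_eq_lebesgue:
  fixes f :: "real \<Rightarrow> real"
  assumes "f \<in> borel_measurable borel" and "\<And>x. \<bar>f x\<bar> \<le> B"
  shows "integral {a..b} f = (LBINT x. indicator {a..b} x * f x)"
  using set_borel_integral_eq_integral(2)[OF bounded_borel_set_integrable[OF assms, of a b]]
  unfolding set_lebesgue_integral_def by simp

lemma bounded_borel_integral_bound: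
  fixes f :: "real \<Rightarrow> real"
  assumes "f \<in> borel_measurable borel" and bnd: "\<And>x. \<bar>f x\<bar> \<le> B" and "a \<le> b"
  shows "\<bar>integral {a..b} f\<bar> \<le> B * (b - a)"
proof -
  have "0 \<le> B" using bnd[of 0] by linarith
  moreover have "f integrable_on cbox a b" using bounded_borel_integrable_on[OF assms(1,2)] by simp
  ultimately have "norm (integral (cbox a b) f) \<le> B * measure lborel (cbox a b)"
    by (intro has_integral_bound[OF _ integrable_integral]) (use bnd in auto)
  then show ?thesis using \<open>a \<le> b\<close> by simp
qed

lemma rectangle_integral_eq_lebesgue:
  fixes g :: "real \<times> real \<Rightarrow> real" and a b c d :: real
  assumes [measurable]: "g \<in> borel_measurable borel" and bnd: "\<And>p. \<bar>g p\<bar> \<le> B"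
  defines "F \<equiv> \<lambda>p. indicator ({a..b} \<times> {c..d}) p * g p"
  shows "integrable (lborel \<Otimes>\<^sub>M lborel) F"
    and "integral ({a..b} \<times> {c..d}) g = integral\<^sup>L (lborel \<Otimes>\<^sub>M lborel) F"
proof -
  have box: "{a..b} \<times> {c..d} = cbox (a, c) (b, d)" by (simp add: cbox_Pair_eq)
  have si: "set_integrable lborel ({a..b} \<times> {c..d}) g"
    unfolding box by (rule bounded_borel_set_integrable[OF _ bnd]) measurable
  show "integrable (lborel \<Otimes>\<^sub>M lborel) F"
    using si unfolding set_integrable_def F_def by (simp add: lborel_prod)
  show "integral ({a..b} \<times> {c..d}) g = integral\<^sup>L (lborel \<Otimes>\<^sub>M lborel) F"
    using set_borel_integral_eq_integral(2)[OF si]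
    unfolding set_lebesgue_integral_def F_def by (simp add: lborel_prod)
qed

text \<open>The library's Fubini theorem for the gauge integral requires continuity; for bounded
  Borel functions we pass through the Lebesgue integral.\<close>

lemma integral_rectangle_iterated:
  fixes g :: "real \<times> real \<Rightarrow> real"
  assumes gm[measurable]: "g \<in> borel_measurable borel" and bnd: "\<And>p. \<bar>g p\<bar> \<le> B"
    and ab: "a \<le> b" and cd: "c \<le> d"
  shows "integral ({a..b} \<times> {c..d}) g = integral {a..b} (\<lambda>x. integral {c..d} (\<lambda>y. g (x, y)))"
    and "integral ({a..b} \<times> {c..d}) g = integral {c..d} (\<lambda>y. integral {a..b} (\<lambda>x. g (x, y)))"
    and "(\<lambda>y. integral {a..b} (\<lambda>x. g (x, y))) integrable_on {c..d}"
proof -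
  define F where "F p = indicator ({a..b} \<times> {c..d}) p * g p" for p
  note F = rectangle_integral_eq_lebesgue[OF gm bnd, of a b c d, folded F_def[abs_def]]
  define I1 where "I1 x = integral {c..d} (\<lambda>y. g (x, y))" for x
  define I2 where "I2 y = integral {a..b} (\<lambda>x. g (x, y))" for y
  have I1e: "I1 x = (LBINT y. indicator {c..d} y * g (x, y))" for x
    unfolding I1_def by (rule bounded_borel_integral_eq_lebesgue) (use bnd in auto)
  have I2e: "I2 y = (LBINT x. indicator {a..b} x * g (x, y))" for y
    unfolding I2_def by (rule bounded_borel_integral_eq_lebesgue) (use bnd in auto)
  have [measurable]: "I1 \<in> borel_measurable borel" "I2 \<in> borel_measurable borel"
    unfolding I1e I2e by measurable
  have I1b: "\<bar>I1 x\<bar> \<le> B * (d - c)" for x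
    unfolding I1_def by (rule bounded_borel_integral_bound) (use bnd cd in auto)
  have I2b: "\<bar>I2 y\<bar> \<le> B * (b - a)" for y
    unfolding I2_def by (rule bounded_borel_integral_bound) (use bnd ab in auto)
  have "integral\<^sup>L (lborel \<Otimes>\<^sub>M lborel) F = (LBINT x. LBINT y. F (x, y))"
    using lborel_pair.integral_fst'[OF F(1)] by simp
  also have "\<dots> = (LBINT x. indicator {a..b} x * I1 x)"
    unfolding I1e F_def by (intro Bochner_Integration.integral_cong) (auto simp: indicator_def)
  also have "\<dots> = integral {a..b} I1"
    by (rule bounded_borel_integral_eq_lebesgue[symmetric]) (use I1b in auto)
  finally show "integral ({a..b} \<times> {c..d}) g = integral {a..b} (\<lambda>x. integral {c..d} (\<lambda>y. g (x, y)))"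
    using F(2) unfolding I1_def by simp
  have "integrable (lborel \<Otimes>\<^sub>M lborel) (\<lambda>(x, y). F (x, y))" using F(1) by (simp add: split_def)
  from lborel_pair.integral_snd[OF this]
  have "integral\<^sup>L (lborel \<Otimes>\<^sub>M lborel) F = (LBINT y. LBINT x. F (x, y))" by (simp add: split_def)
  also have "\<dots> = (LBINT y. indicator {c..d} y * I2 y)"
    unfolding I2e F_def by (intro Bochner_Integration.integral_cong) (auto simp: indicator_def)
  also have "\<dots> = integral {c..d} I2"
    by (rule bounded_borel_integral_eq_lebesgue[symmetric]) (use I2b in auto)
  finally show "integral ({a..b} \<times> {c..d}) g = integral {c..d} (\<lambda>y. integral {a..b} (\<lambda>x. g (x, y)))"
    using F(2) unfolding I2_def by simp
  have "I2 integrable_on {c..d}" by (rule bounded_borel_integrable_on[OF _ I2b]) measurable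
  then show "(\<lambda>y. integral {a..b} (\<lambda>x. g (x, y))) integrable_on {c..d}"
    unfolding I2_def .
qed

lemma sin_pos_iff_double_period:
  fixes y :: real
  assumes "-2*pi < y" "y \<le> 2*pi"
  shows "sin y > 0 \<longleftrightarrow> (0 < y \<and> y < pi) \<or> y < -pi"
proof -
  consider "y < -pi" | "-pi \<le> y" "y \<le> 0" | "0 < y" "y < pi" | "pi \<le> y"
    by linarith
  then show ?thesis
  proof cases
    case 1
    then have "sin (y + 2*pi) > 0" using assms by (intro sin_gt_zero) auto
    then show ?thesis using 1 by simp
  next
    case 2
    then have "sin (-y) \<ge> 0" by (intro sin_ge_zero) auto
    then show ?thesis using 2 by simp
  next
    case 3
    then show ?thesis using sin_gt_zero by simp
  next
    case 4
    then have "sin (y - pi) \<ge> 0" using assms by (intro sin_ge_zero) auto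
    moreover have "sin y = - sin (y - pi)" by (metis diff_add_cancel sin_periodic_pi)
    ultimately have "\<not> sin y > 0" by linarith
    moreover have "\<not> y < -pi" using 4 pi_gt_zero by linarith
    ultimately show ?thesis using 4 by auto
  qed
qed

lemma half_le_sin:
  fixes y :: real
  assumes "0 \<le> y" "y \<le> 1"
  shows "y / 2 \<le> sin y"
proof -
  have "(\<lambda>t. sin t - t / 2) 0 \<le> (\<lambda>t. sin t - t / 2) y"
  proof (rule DERIV_nonneg_imp_nondecreasing[of 0 y])
    show "0 \<le> y" by fact
    fix t assume t: "0 \<le> t" "t \<le> y"
    have "cos (pi/3) < cos t" using t assms pi_gt3 by (intro cos_monotone_0_pi) auto
    then have "cos t \<ge> 1/2" by (simp add: cos_60)
    moreover have "((\<lambda>t. sin t - t / 2) has_real_derivative (cos t - 1/2)) (at t)"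
      by (auto intro!: derivative_eq_intros)
    ultimately show "\<exists>d. ((\<lambda>t. sin t - t / 2) has_real_derivative d) (at t) \<and> 0 \<le> d" by force
  qed
  then show ?thesis by simp
qed

lemma has_antiderivative_above:
  fixes f :: "real \<Rightarrow> real"
  assumes "\<And>x. L \<le> x \<Longrightarrow> isCont f x"
  obtains F where "\<And>x. x > L \<Longrightarrow> (F has_real_derivative f x) (at x)"
proof
  fix x assume "x > L"
  have "continuous_on {L..x+1} f" using assms by (intro continuous_at_imp_continuous_on) auto
  then have "((\<lambda>x. integral {L..x} f) has_real_derivative f x) (at x within {L..x+1})"
    by (rule integral_has_real_derivative) (use \<open>x > L\<close> in auto)
  moreover have "at x within {L..x+1} = at x" by (rule at_within_Icc_at) (use \<open>x > L\<close> in auto)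
  ultimately show "((\<lambda>x. integral {L..x} f) has_real_derivative f x) (at x)" by simp
qed

lemma has_integral_of_real_derivative:
  fixes F f :: "real \<Rightarrow> real"
  assumes "a \<le> b" "\<And>x. x \<in> {a..b} \<Longrightarrow> (F has_real_derivative f x) (at x)"
  shows "(f has_integral F b - F a) {a..b}"
  using assms by (intro fundamental_theorem_of_calculus)
    (auto simp: has_real_derivative_iff_has_vector_derivative intro: has_vector_derivative_at_within)

lemma integral_of_real_derivative:
  fixes F f :: "real \<Rightarrow> real"
  assumes "a \<le> b" "\<And>x. x \<in> {a..b} \<Longrightarrow> (F has_real_derivative f x) (at x)"
  shows "integral {a..b} f = F b - F a"
  using integral_unique[OF has_integral_of_real_derivative[OF assms]] .

lemma integral_restrict_subinterval:
  fixes f :: "real \<Rightarrow> real"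
  assumes "A \<le> p" "q \<le> B"
  shows "integral {A..B} (\<lambda>u. if p \<le> u \<and> u \<le> q then f u else 0) = integral {p..q} f"
proof -
  have "integral {A..B} (\<lambda>u. if p \<le> u \<and> u \<le> q then f u else 0) = integral ({p..q} \<inter> {A..B}) f"
    by (subst integral_restrict_Int[symmetric]) simp
  also have "{p..q} \<inter> {A..B} = {p..q}" using assms by auto
  finally show ?thesis .
qed

lemma bv_onI:
  assumes "\<And>n x. \<forall>i\<le>n. a \<le> x i \<and> x i \<le> b \<Longrightarrow> \<forall>i<n. x i \<le> x (Suc i) \<Longrightarrow>
    (\<Sum>i<n. \<bar>f (x (Suc i)) - f (x i)\<bar>) \<le> M"
  shows "bv_on f a b"
  using assms unfolding bv_on_def by blast

lemma bv_onE:
  assumes "bv_on f a b"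
  obtains M where "\<And>n x. \<forall>i\<le>n. a \<le> x i \<and> x i \<le> b \<Longrightarrow> \<forall>i<n. x i \<le> x (Suc i) \<Longrightarrow>
    (\<Sum>i<n. \<bar>f (x (Suc i)) - f (x i)\<bar>) \<le> M"
  using assms unfolding bv_on_def by blast

lemma bv_on_mono:
  assumes "mono f"
  shows "bv_on f a b"
proof (rule bv_onI)
  fix n :: nat and x :: "nat \<Rightarrow> real"
  assume x: "\<forall>i\<le>n. a \<le> x i \<and> x i \<le> b" "\<forall>i<n. x i \<le> x (Suc i)"
  have "(\<Sum>i<n. \<bar>f (x (Suc i)) - f (x i)\<bar>) = (\<Sum>i<n. f (x (Suc i)) - f (x i))"
    using x assms by (intro sum.cong) (auto simp: mono_def)
  also have "\<dots> = f (x n) - f (x 0)" by (rule sum_lessThan_telescope)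
  also have "\<dots> \<le> f b - f a" using x assms by (auto intro!: diff_mono simp: mono_def)
  finally show "(\<Sum>i<n. \<bar>f (x (Suc i)) - f (x i)\<bar>) \<le> f b - f a" .
qed

lemma bv_on_add:
  assumes "bv_on f a b" "bv_on g a b"
  shows "bv_on (\<lambda>x. f x + g x) a b"
proof -
  obtain Mf where Mf: "\<And>n x. \<forall>i\<le>n. a \<le> x i \<and> x i \<le> b \<Longrightarrow> \<forall>i<n. x i \<le> x (Suc i) \<Longrightarrow>
      (\<Sum>i<n. \<bar>f (x (Suc i)) - f (x i)\<bar>) \<le> Mf"
    using bv_onE[OF assms(1)] by blast
  obtain Mg where Mg: "\<And>n x. \<forall>i\<le>n. a \<le> x i \<and> x i \<le> b \<Longrightarrow> \<forall>i<n. x i \<le> x (Suc i) \<Longrightarrow>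
      (\<Sum>i<n. \<bar>g (x (Suc i)) - g (x i)\<bar>) \<le> Mg"
    using bv_onE[OF assms(2)] by blast
  show ?thesis
  proof (rule bv_onI)
    fix n :: nat and x :: "nat \<Rightarrow> real"
    assume x: "\<forall>i\<le>n. a \<le> x i \<and> x i \<le> b" "\<forall>i<n. x i \<le> x (Suc i)"
    have "(\<Sum>i<n. \<bar>f (x (Suc i)) + g (x (Suc i)) - (f (x i) + g (x i))\<bar>)
        \<le> (\<Sum>i<n. \<bar>f (x (Suc i)) - f (x i)\<bar>) + (\<Sum>i<n. \<bar>g (x (Suc i)) - g (x i)\<bar>)"
      unfolding sum.distrib[symmetric] by (intro sum_mono) linarith
    also have "\<dots> \<le> Mf + Mg" using Mf[OF x] Mg[OF x] by simp
    finally show "(\<Sum>i<n. \<bar>f (x (Suc i)) + g (x (Suc i)) - (f (x i) + g (x i))\<bar>) \<le> Mf + Mg" .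
  qed
qed

lemma bv_on_cmult:
  assumes "bv_on f a b"
  shows "bv_on (\<lambda>x. c * f x) a b"
proof -
  obtain M where M: "\<And>n x. \<forall>i\<le>n. a \<le> x i \<and> x i \<le> b \<Longrightarrow> \<forall>i<n. x i \<le> x (Suc i) \<Longrightarrow>
      (\<Sum>i<n. \<bar>f (x (Suc i)) - f (x i)\<bar>) \<le> M"
    using bv_onE[OF assms] by blast
  show ?thesis
  proof (rule bv_onI)
    fix n :: nat and x :: "nat \<Rightarrow> real"
    assume x: "\<forall>i\<le>n. a \<le> x i \<and> x i \<le> b" "\<forall>i<n. x i \<le> x (Suc i)"
    have "(\<Sum>i<n. \<bar>c * f (x (Suc i)) - c * f (x i)\<bar>) = \<bar>c\<bar> * (\<Sum>i<n. \<bar>f (x (Suc i)) - f (x i)\<bar>)"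
      by (simp add: sum_distrib_left abs_mult flip: right_diff_distrib)
    also have "\<dots> \<le> \<bar>c\<bar> * M" using M[OF x] by (simp add: mult_left_mono)
    finally show "(\<Sum>i<n. \<bar>c * f (x (Suc i)) - c * f (x i)\<bar>) \<le> \<bar>c\<bar> * M" .
  qed
qed

lemma bv_on_cong:
  assumes "bv_on f a b" "\<And>x. a \<le> x \<Longrightarrow> x \<le> b \<Longrightarrow> f x = g x"
  shows "bv_on g a b"
proof -
  obtain M where M: "\<And>n x. \<forall>i\<le>n. a \<le> x i \<and> x i \<le> b \<Longrightarrow> \<forall>i<n. x i \<le> x (Suc i) \<Longrightarrow>
      (\<Sum>i<n. \<bar>f (x (Suc i)) - f (x i)\<bar>) \<le> M"
    using bv_onE[OF assms(1)] by blast
  show ?thesis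
  proof (rule bv_onI)
    fix n :: nat and x :: "nat \<Rightarrow> real"
    assume x: "\<forall>i\<le>n. a \<le> x i \<and> x i \<le> b" "\<forall>i<n. x i \<le> x (Suc i)"
    have "(\<Sum>i<n. \<bar>g (x (Suc i)) - g (x i)\<bar>) = (\<Sum>i<n. \<bar>f (x (Suc i)) - f (x i)\<bar>)"
      using x(1) assms(2) by (intro sum.cong) auto
    then show "(\<Sum>i<n. \<bar>g (x (Suc i)) - g (x i)\<bar>) \<le> M" using M[OF x] by simp
  qed
qed

section \<open>The tangent angle of the unit sphere\<close>

text \<open>After a change of sign the tangent angle of the unit sphere satisfies these assumptions
  (lemma \<open>monotone_angle_lift\<close>); the estimates use only the quasi-periodicity, not the value of \<open>k\<close>.\<close>

locale monotone_angle =
  fixes \<beta> :: "real \<Rightarrow> real" and k :: int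
  assumes angle_strict_mono: "strict_mono \<beta>" and angle_continuous: "continuous_on UNIV \<beta>"
    and angle_quasi_periodic: "\<And>u. \<beta> (u + 2*pi) = \<beta> u + 2*pi * of_int k"

locale unit_sphere_curve =
  fixes N :: "complex \<Rightarrow> real" and \<gamma> :: "real \<Rightarrow> complex" and \<alpha> :: "real \<Rightarrow> real"
    and D :: "complex \<Rightarrow> (complex \<Rightarrow>\<^sub>L real)"
  assumes norm: "is_norm2 N" and strictly_convex: "strictly_convex_norm N"
    and norm_derivative: "\<And>x. x \<noteq> 0 \<Longrightarrow> (N has_derivative blinfun_apply (D x)) (at x)"
    and periodic: "\<And>t. \<gamma> (t + 2*pi) = \<gamma> t"
    and inj: "inj_on \<gamma> {0..<2*pi}"
    and range: "range \<gamma> = {z. N z = 1}"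
    and tangent: "\<And>t. (\<gamma> has_vector_derivative cis (\<alpha> t)) (at t)"
    and angle_continuous: "continuous_on UNIV \<alpha>"
begin

lemma norm_curve: "N (\<gamma> t) = 1"
  using range by auto

lemma norm_derivative_curve: "(N has_derivative blinfun_apply (D (\<gamma> u))) (at (\<gamma> u))"
  using norm_derivative norm_curve is_norm2D(1)[OF norm] by (metis zero_neq_one)

lemma continuous_curve: "continuous_on UNIV \<gamma>"
  by (intro continuous_at_imp_continuous_on ballI has_vector_derivative_continuous[OF tangent])

lemma tangent_in_kernel: "blinfun_apply (D (\<gamma> u)) (cis (\<alpha> u)) = 0"
proof -
  have "(\<gamma> has_derivative (\<lambda>x. x *\<^sub>R cis (\<alpha> u))) (at u)"
    using tangent[of u] by (simp add: has_vector_derivative_def)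
  from diff_chain_at[OF this norm_derivative_curve]
  have "((\<lambda>t. N (\<gamma> t)) has_derivative (\<lambda>x. blinfun_apply (D (\<gamma> u)) (x *\<^sub>R cis (\<alpha> u)))) (at u)"
    by (simp add: o_def)
  then have "((\<lambda>t::real. 1::real) has_derivative (\<lambda>x. blinfun_apply (D (\<gamma> u)) (x *\<^sub>R cis (\<alpha> u)))) (at u)"
    by (simp add: norm_curve)
  with has_derivative_const have "(\<lambda>x. blinfun_apply (D (\<gamma> u)) (x *\<^sub>R cis (\<alpha> u))) = (\<lambda>x. 0)"
    using has_derivative_unique by blast
  then show ?thesis by (metis scaleR_one)
qed

text \<open>\<open>tangent_offset u\<close> is the signed distance from the origin to the tangent line at \<open>\<gamma> u\<close>;
  it cannot vanish because that line supports the unit ball.\<close>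

definition tangent_offset :: "real \<Rightarrow> real" where
  "tangent_offset u = wedge (cis (\<alpha> u)) (\<gamma> u)"

definition dual_coeff :: "real \<Rightarrow> real" where
  "dual_coeff u = blinfun_apply (D (\<gamma> u)) (\<i> * cis (\<alpha> u))"

lemma norm_derivative_curve_eq: "blinfun_apply (D (\<gamma> u)) z = dual_coeff u * wedge (cis (\<alpha> u)) z"
  unfolding dual_coeff_def
  by (rule linear_eq_wedge_if_vanishing[OF has_derivative_linear[OF norm_derivative_curve] _ tangent_in_kernel]) simp

lemma dual_coeff_tangent_offset: "dual_coeff u * tangent_offset u = 1"
  using is_norm2_derivative_supports(1)[OF norm norm_derivative_curve norm_curve]
    norm_derivative_curve_eq[of u "\<gamma> u"]
  unfolding tangent_offset_def by simp

lemma tangent_offset_same_sign: "tangent_offset u * tangent_offset v > 0"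
proof (rule continuous_nonvanishing_same_sign[where S=UNIV and f=tangent_offset])
  show "continuous_on UNIV tangent_offset"
    unfolding tangent_offset_def wedge_def
    by (intro continuous_intros continuous_curve continuous_on_cis angle_continuous)
  show "tangent_offset x \<noteq> 0" if "x \<in> UNIV" for x using dual_coeff_tangent_offset[of x] by auto
qed auto

text \<open>Since the norm is differentiable and strictly convex, the Gauss map of the unit
  sphere is injective: both points are contact points of the same supporting line.\<close>

lemma tangent_determines_point:
  assumes "cis (\<alpha> u) = cis (\<alpha> v)"
  shows "\<gamma> u = \<gamma> v"
proof -
  let ?w = tangent_offset
  have dual: "dual_coeff x = 1 / ?w x" for x
  proof -
    have "?w x \<noteq> 0" using dual_coeff_tangent_offset[of x] by auto
    then show ?thesis using dual_coeff_tangent_offset[of x] by (simp add: eq_divide_eq)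
  qed
  have Du: "blinfun_apply (D (\<gamma> u)) (\<gamma> v) = ?w v / ?w u"
    using norm_derivative_curve_eq[of u "\<gamma> v"] assms by (simp add: dual tangent_offset_def)
  have Dv: "blinfun_apply (D (\<gamma> v)) (\<gamma> u) = ?w u / ?w v"
    using norm_derivative_curve_eq[of v "\<gamma> u"] assms by (simp add: dual tangent_offset_def)
  have le: "?w v / ?w u \<le> 1" "?w u / ?w v \<le> 1"
    using is_norm2_derivative_supports(2)[OF norm norm_derivative_curve norm_curve] Du Dv norm_curve
    by metis+
  have "?w v / ?w u = 1"
  proof -
    define q where "q = ?w v / ?w u"
    have "0 < q" unfolding q_def
      using tangent_offset_same_sign[of u v] by (auto simp: zero_less_divide_iff zero_less_mult_iff)
    moreover have "1 / q \<le> 1" "q \<le> 1" using le unfolding q_def by simp_all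
    ultimately show ?thesis unfolding q_def[symmetric] by (simp add: divide_le_eq_1)
  qed
  then show ?thesis
    using strictly_convex_support_point_unique[OF norm strictly_convex norm_derivative_curve norm_curve norm_curve] Du
    by metis
qed

lemma curve_inj_within_period:
  assumes "u < v" "v < u + 2*pi"
  shows "\<gamma> u \<noteq> \<gamma> v"
proof
  assume eq: "\<gamma> u = \<gamma> v"
  define ku where "ku = \<lfloor>u / (2*pi)\<rfloor>"
  define kv where "kv = \<lfloor>v / (2*pi)\<rfloor>"
  have "of_int ku \<le> u / (2*pi)" "u / (2*pi) < of_int ku + 1"
    "of_int kv \<le> v / (2*pi)" "v / (2*pi) < of_int kv + 1"
    unfolding ku_def kv_def by linarith+
  then have range_u: "u - of_int ku * (2*pi) \<in> {0..<2*pi}"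
    and range_v: "v - of_int kv * (2*pi) \<in> {0..<2*pi}"
    by (auto simp: field_simps)
  have "\<gamma> (u - of_int ku * (2*pi)) = \<gamma> (v - of_int kv * (2*pi))"
    using eq periodic_plus_of_int[where p=\<gamma>, OF periodic] by (metis diff_add_cancel)
  then have "u - of_int ku * (2*pi) = v - of_int kv * (2*pi)"
    using inj range_u range_v unfolding inj_on_def by blast
  then have "v - u = of_int (kv - ku) * (2*pi)" by (simp add: algebra_simps)
  then have "0 < of_int (kv - ku) * (2*pi)" "of_int (kv - ku) * (2*pi) < 1 * (2*pi)"
    using assms by linarith+
  then have "0 < kv - ku" "kv - ku < 1"
    by (simp_all add: zero_less_mult_iff mult_less_cancel_right)
  then show False by linarith
qed

lemma tangent_angle_inj_within_period: "u < v \<Longrightarrow> v < u + 2*pi \<Longrightarrow> \<alpha> u \<noteq> \<alpha> v"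
  using curve_inj_within_period tangent_determines_point by metis

lemma tangent_angle_signed_strict_mono:
  obtains \<epsilon> :: real where "\<epsilon> = 1 \<or> \<epsilon> = -1" "strict_mono (\<lambda>u. \<epsilon> * \<alpha> u)"
proof -
  define S where "S = (UNIV :: real set) \<times> {0<..<2*pi}"
  define F where "F p = \<alpha> (fst p + snd p) - \<alpha> (fst p)" for p :: "real \<times> real"
  have "connected S" unfolding S_def by (intro convex_connected convex_Times) auto
  moreover have "continuous_on S F" unfolding F_def
    by (intro continuous_intros continuous_on_compose2[OF angle_continuous]) auto
  moreover have nz: "F p \<noteq> 0" if "p \<in> S" for p
    using that tangent_angle_inj_within_period[of "fst p" "fst p + snd p"] unfolding S_def F_def by auto
  moreover have "(0, pi) \<in> S" unfolding S_def by auto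
  ultimately have sign: "F (a, b - a) * F (0, pi) > 0" if "a < b" "b < a + 2*pi" for a b
    using that by (intro continuous_nonvanishing_same_sign) (auto simp: S_def)
  define \<epsilon> where "\<epsilon> = (if F (0, pi) > 0 then 1 else - 1 :: real)"
  have "\<epsilon> = 1 \<or> \<epsilon> = -1" unfolding \<epsilon>_def by simp
  moreover have "strict_mono (\<lambda>u. \<epsilon> * \<alpha> u)"
  proof (rule strict_mono_if_locally_strict_mono[where c="2*pi"])
    fix a b :: real assume "a < b" "b < a + 2*pi"
    then show "\<epsilon> * \<alpha> a < \<epsilon> * \<alpha> b"
      using sign[of a b] unfolding \<epsilon>_def F_def by (auto simp: zero_less_mult_iff)
  qed simp
  ultimately show ?thesis using that by blast
qed

lemma cis_tangent_angle_periodic: "cis (\<alpha> (u + 2*pi)) = cis (\<alpha> u)"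
proof -
  have "((\<lambda>t. t + 2*pi) has_vector_derivative 1) (at u)"
    by (auto intro!: derivative_eq_intros simp: has_real_derivative_iff_has_vector_derivative[symmetric])
  from vector_diff_chain_at[OF this tangent]
  have "((\<gamma> \<circ> (\<lambda>t. t + 2*pi)) has_vector_derivative cis (\<alpha> (u + 2*pi))) (at u)" by simp
  moreover have "\<gamma> \<circ> (\<lambda>t. t + 2*pi) = \<gamma>" using periodic by auto
  ultimately show ?thesis using tangent[of u] vector_derivative_unique_at by auto
qed

text \<open>The increment \<open>\<alpha> (u + 2\<pi>) - \<alpha> u\<close> is a continuous function with values in
  \<open>2\<pi>\<int>\<close>, hence constant.\<close>

lemma tangent_angle_quasi_periodic:
  obtains k :: int where "\<And>u. \<alpha> (u + 2*pi) = \<alpha> u + 2*pi * of_int k"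
proof -
  define h where "h u = (\<alpha> (u + 2*pi) - \<alpha> u) / (2*pi)" for u
  have h_int: "h u \<in> \<int>" for u
  proof -
    have "cos (\<alpha> (u + 2*pi) - \<alpha> u) = 1"
      using cis_tangent_angle_periodic[of u] by (metis cis.sel(1) cis_divide divide_self_if cis_neq_zero one_complex.sel(1))
    then obtain n :: int where "\<alpha> (u + 2*pi) - \<alpha> u = of_int n * 2 * pi"
      using cos_one_2pi_int by blast
    then show ?thesis unfolding h_def by simp
  qed
  have "h constant_on UNIV"
  proof (rule continuous_discrete_range_constant)
    show "continuous_on UNIV h" unfolding h_def
      by (intro continuous_intros continuous_on_compose2[OF angle_continuous]) auto
    show "\<exists>e>0. \<forall>y. y \<in> UNIV \<and> h y \<noteq> h x \<longrightarrow> e \<le> norm (h y - h x)" for x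
      using Ints_nonzero_abs_ge1[OF Ints_diff[OF h_int h_int]] by (intro exI[of _ 1]) auto
  qed simp
  then have "h u = h 0" for u unfolding constant_on_def by auto
  moreover obtain k where "h 0 = of_int k" using h_int[of 0] Ints_cases by blast
  ultimately show ?thesis using that unfolding h_def by (auto simp: field_simps)
qed

lemma monotone_angle_lift:
  obtains \<epsilon> :: real and k :: int
  where "\<epsilon> = 1 \<or> \<epsilon> = -1" "monotone_angle (\<lambda>u. \<epsilon> * \<alpha> u) k"
proof -
  obtain \<epsilon> :: real where \<epsilon>: "\<epsilon> = 1 \<or> \<epsilon> = -1" "strict_mono (\<lambda>u. \<epsilon> * \<alpha> u)"
    using tangent_angle_signed_strict_mono by blast
  obtain k :: int where k: "\<And>u. \<alpha> (u + 2*pi) = \<alpha> u + 2*pi * of_int k"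
    using tangent_angle_quasi_periodic by blast
  have "monotone_angle (\<lambda>u. \<epsilon> * \<alpha> u) (if \<epsilon> = 1 then k else - k)"
    by unfold_locales (use \<epsilon> k in \<open>auto intro: continuous_intros angle_continuous simp: algebra_simps\<close>)
  with \<epsilon>(1) show ?thesis using that by blast
qed

end

section \<open>The test function and the arc correlation\<close>

lemma wedge_cis: "wedge (cis a) (cis b) = sin (b - a)"
  by (simp add: wedge_def sin_diff algebra_simps)

lemma cis_inner: "cis s \<bullet> cis t = cos (s - t)"
  by (simp add: inner_complex_def cos_diff)

definition halfplane_diff :: "real \<Rightarrow> real \<Rightarrow> real \<Rightarrow> real" where
  "halfplane_diff \<theta>1 \<theta>2 s =
     (if cis s \<bullet> cis \<theta>2 > 0 then 1 else 0) - (if cis s \<bullet> cis \<theta>1 > 0 then 1 else 0)"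

lemma halfplane_diff_cos:
  "halfplane_diff \<theta>1 \<theta>2 s = (if cos (s - \<theta>2) > 0 then 1 else 0) - (if cos (s - \<theta>1) > 0 then 1 else 0)"
  unfolding halfplane_diff_def cis_inner ..

lemma halfplane_diff_measurable [measurable]: "halfplane_diff \<theta>1 \<theta>2 \<in> borel_measurable borel"
  unfolding halfplane_diff_cos[abs_def] by measurable

lemma abs_halfplane_diff_le: "\<bar>halfplane_diff \<theta>1 \<theta>2 s\<bar> \<le> 1"
  unfolding halfplane_diff_def by auto

lemma halfplane_diff_periodic: "halfplane_diff \<theta>1 \<theta>2 (s + 2*pi) = halfplane_diff \<theta>1 \<theta>2 s"
proof -
  have "cos (s + 2*pi - t) = cos (s - t)" for t
    by (metis add_diff_eq cos_periodic diff_add_eq)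
  then show ?thesis unfolding halfplane_diff_cos by simp
qed

lemma halfplane_diff_swap: "halfplane_diff \<theta>2 \<theta>1 s = - halfplane_diff \<theta>1 \<theta>2 s"
  unfolding halfplane_diff_def by simp

lemma halfplane_diff_same: "halfplane_diff \<theta> \<theta> s = 0"
  unfolding halfplane_diff_def by simp

lemma Delta_eq_integral:
  "Delta \<phi> \<beta> \<theta>1 \<theta>2 = integral ({0..2*pi} \<times> {0..2*pi}) (\<lambda>(s, t). \<phi> (t - s)
     * sin (\<beta> (t - pi/2) - \<beta> (s - pi/2)) * halfplane_diff \<theta>1 \<theta>2 s * halfplane_diff \<theta>1 \<theta>2 t)"
  unfolding Delta_def wedge_cis halfplane_diff_def ..

lemma Delta_swap: "Delta \<phi> \<beta> \<theta>2 \<theta>1 = Delta \<phi> \<beta> \<theta>1 \<theta>2"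
  unfolding Delta_eq_integral halfplane_diff_swap[of \<theta>2 \<theta>1] by simp

lemma Delta_same: "Delta \<phi> \<beta> \<theta> \<theta> = 0"
  unfolding Delta_eq_integral halfplane_diff_same by (simp add: case_prod_unfold)

lemma Delta_sign_flip:
  assumes "\<epsilon> = 1 \<or> \<epsilon> = -1"
  shows "Delta (\<lambda>x. \<epsilon> * \<phi> x) (\<lambda>u. \<epsilon> * \<beta> u) \<theta>1 \<theta>2 = Delta \<phi> \<beta> \<theta>1 \<theta>2"
proof -
  have sign: "\<epsilon> * a * sin (\<epsilon> * b - \<epsilon> * c) = a * sin (b - c)" for a b c
    using assms by (elim disjE) (simp_all add: sin_diff algebra_simps)
  show ?thesis unfolding Delta_eq_integral sign ..
qed

lemma Lambda_swap: "Lambda \<beta> \<theta>2 \<theta>1 = Lambda \<beta> \<theta>1 \<theta>2"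
  unfolding Lambda_def by (simp add: min.commute max.commute)

lemma Lambda_same: "Lambda \<beta> \<theta> \<theta> = 0"
proof -
  have "Henstock_Kurzweil_Integration.content (cbox (\<theta>, \<theta>) (\<theta>, \<theta>)) = 0"
    unfolding content_Pair by simp
  then have "integral (cbox (\<theta>, \<theta>) (\<theta>, \<theta>)) (\<lambda>(s, t). \<bar>\<beta> t - \<beta> s\<bar>) = 0"
    by (rule integral_null)
  then show ?thesis unfolding Lambda_def by (simp add: cbox_Pair_eq)
qed

lemma Lambda_sign_flip:
  assumes "\<epsilon> = 1 \<or> \<epsilon> = -1"
  shows "Lambda (\<lambda>u. \<epsilon> * \<beta> u) \<theta>1 \<theta>2 = Lambda \<beta> \<theta>1 \<theta>2"
  unfolding Lambda_def using assms by (auto simp: abs_mult simp flip: right_diff_distrib)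

lemma halfplane_diff_rotated:
  assumes "-2*pi < \<theta>1 - v" "\<theta>1 - v \<le> 2*pi" "-2*pi < \<theta>2 - v" "\<theta>2 - v \<le> 2*pi"
  shows "halfplane_diff \<theta>1 \<theta>2 (v + pi/2) =
    (if (0 < \<theta>2 - v \<and> \<theta>2 - v < pi) \<or> \<theta>2 - v < -pi then 1 else 0)
    - (if (0 < \<theta>1 - v \<and> \<theta>1 - v < pi) \<or> \<theta>1 - v < -pi then 1 else 0)"
proof -
  have "cos (v + pi/2 - t) = sin (t - v)" for t by (simp add: cos_sin_eq algebra_simps)
  then show ?thesis
    unfolding halfplane_diff_cos
    using sin_pos_iff_double_period[OF assms(1,2)] sin_pos_iff_double_period[OF assms(3,4)] by simp
qed

text \<open>For \<open>0 < \<eta> \<le> \<pi>\<close>, \<open>odd_window \<eta>\<close> is, modulo \<open>2\<pi>\<close>, the indicator of \<open>(0, \<eta>)\<close>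
  minus the indicator of \<open>(-\<eta>, 0)\<close>.\<close>

definition odd_window :: "real \<Rightarrow> real \<Rightarrow> real" where
  "odd_window \<eta> x =
     (if 0 < sin x \<and> cos \<eta> < cos x then 1 else if sin x < 0 \<and> cos \<eta> < cos x then -1 else 0)"

lemma odd_window_measurable [measurable]: "odd_window \<eta> \<in> borel_measurable borel"
  unfolding odd_window_def[abs_def] by measurable

lemma abs_odd_window_le: "\<bar>odd_window \<eta> x\<bar> \<le> 1"
  unfolding odd_window_def by auto

lemma odd_window_periodic: "odd_window \<eta> (x + 2*pi) = odd_window \<eta> x"
  unfolding odd_window_def by simp

lemma odd_window_minus: "odd_window \<eta> (- x) = - odd_window \<eta> x"
  unfolding odd_window_def by auto

lemma odd_window_inside: "0 < x \<Longrightarrow> x < \<eta> \<Longrightarrow> \<eta> \<le> pi \<Longrightarrow> odd_window \<eta> x = 1"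
  unfolding odd_window_def using sin_gt_zero[of x] cos_monotone_0_pi[of x \<eta>] by auto

lemma odd_window_outside: "\<eta> \<le> x \<Longrightarrow> x \<le> pi \<Longrightarrow> 0 \<le> \<eta> \<Longrightarrow> odd_window \<eta> x = 0"
  unfolding odd_window_def using cos_monotone_0_pi_le[of \<eta> x] by auto

lemma odd_window_steps:
  assumes "0 < \<eta>" "\<eta> \<le> pi" "0 \<le> x" "x \<le> 2*pi"
  shows "odd_window \<eta> x =
    of_bool (0 < x) - of_bool (\<eta> \<le> x) - of_bool (2*pi - \<eta> < x) + of_bool (2*pi \<le> x)"
proof -
  have reflect: "odd_window \<eta> x = - odd_window \<eta> (2*pi - x)"
    using odd_window_minus[of \<eta> x] odd_window_periodic[of \<eta> "- x"] by simp
  consider "x = 0" | "0 < x" "x < \<eta>" | "\<eta> \<le> x" "x \<le> pi" | "pi \<le> x" "x \<le> 2*pi - \<eta>"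
    | "2*pi - \<eta> < x" "x < 2*pi" | "x = 2*pi"
    using assms by linarith
  then show ?thesis
  proof cases
    case 4 then show ?thesis using reflect odd_window_outside[of \<eta> "2*pi - x"] assms by auto
  next
    case 5 then show ?thesis using reflect odd_window_inside[of "2*pi - x" \<eta>] assms by auto
  qed (use assms odd_window_inside odd_window_outside in \<open>auto simp: odd_window_def\<close>)
qed

lemma bv_on_odd_window:
  assumes "0 < \<eta>" "\<eta> \<le> pi"
  shows "bv_on (odd_window \<eta>) 0 (2*pi)"
proof (rule bv_on_cong)
  show "bv_on (\<lambda>x. of_bool (0 < x) + (-1) * of_bool (\<eta> \<le> x) + (-1) * of_bool (2*pi - \<eta> < x)
      + of_bool (2*pi \<le> x)) 0 (2*pi)"
    by (intro bv_on_add bv_on_cmult bv_on_mono) (auto simp: mono_def)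
qed (use odd_window_steps[OF assms] in simp)

context monotone_angle
begin

lemma angle_le: "u \<le> v \<Longrightarrow> \<beta> u \<le> \<beta> v"
  using angle_strict_mono strict_mono_less_eq by blast

lemma angle_less: "u < v \<Longrightarrow> \<beta> u < \<beta> v"
  using angle_strict_mono strict_mono_less by blast

lemma angle_measurable [measurable]: "\<beta> \<in> borel_measurable borel"
  by (rule borel_measurable_continuous_onI[OF angle_continuous])

lemma angle_increment_periodic: "\<beta> (u + 2*pi + y) - \<beta> (u + 2*pi) = \<beta> (u + y) - \<beta> u"
  using angle_quasi_periodic[of "u + y"] angle_quasi_periodic[of u] by (simp add: algebra_simps)

lemma angle_increment_extrema:
  obtains a b where "\<And>u. \<beta> (a + y) - \<beta> a \<le> \<beta> (u + y) - \<beta> u"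
    and "\<And>u. \<beta> (u + y) - \<beta> u \<le> \<beta> (b + y) - \<beta> b"
proof -
  define h where "h u = \<beta> (u + y) - \<beta> u" for u
  have per: "h (u + 2*pi) = h u" for u unfolding h_def using angle_increment_periodic[of u y] by (simp add: algebra_simps)
  have cont: "continuous_on {0..2*pi} h" unfolding h_def
    by (intro continuous_intros continuous_on_compose2[OF angle_continuous]) auto
  obtain a where a: "\<forall>z\<in>{0..2*pi}. h a \<le> h z"
    using continuous_attains_inf[OF compact_Icc _ cont] by auto
  obtain b where b: "\<forall>z\<in>{0..2*pi}. h z \<le> h b"
    using continuous_attains_sup[OF compact_Icc _ cont] by auto
  have "h a \<le> h u \<and> h u \<le> h b" for u
    using periodic_reduce_to_period[where p=h, OF per, of u] a b by auto
  then show ?thesis using that unfolding h_def by blast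
qed

lemma angle_increment_lower:
  assumes "0 < y"
  obtains m where "0 < m" "\<And>u. m \<le> \<beta> (u + y) - \<beta> u"
proof -
  obtain a where "\<And>u. \<beta> (a + y) - \<beta> a \<le> \<beta> (u + y) - \<beta> u"
    using angle_increment_extrema by metis
  moreover have "0 < \<beta> (a + y) - \<beta> a" using angle_less[of a "a + y"] assms by simp
  ultimately show ?thesis using that by blast
qed

lemma angle_increment_upper:
  obtains M where "\<And>u. \<beta> (u + y) - \<beta> u \<le> M"
  using angle_increment_extrema by metis

lemma angle_increment_small:
  assumes "0 < e"
  obtains d where "0 < d" "\<And>u y. 0 \<le> y \<Longrightarrow> y \<le> d \<Longrightarrow> \<beta> (u + y) - \<beta> u \<le> e"
proof -
  have "uniformly_continuous_on {0..2*pi+1} \<beta>"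
    by (rule compact_uniformly_continuous[OF continuous_on_subset[OF angle_continuous]]) auto
  then obtain d0 where d0: "d0 > 0"
    "\<forall>x\<in>{0..2*pi+1}. \<forall>x'\<in>{0..2*pi+1}. dist x' x < d0 \<longrightarrow> dist (\<beta> x') (\<beta> x) < e"
    unfolding uniformly_continuous_on_def using assms by meson
  define d where "d = min (d0/2) (1/2)"
  have "\<beta> (u + y) - \<beta> u \<le> e" if y: "0 \<le> y" "y \<le> d" for u y
  proof -
    define h where "h u = \<beta> (u + y) - \<beta> u" for u
    have "h (u + 2*pi) = h u" for u unfolding h_def using angle_increment_periodic[of u y] by (simp add: algebra_simps)
    then have "\<exists>u'\<in>{0..2*pi}. h u = h u'" by (rule periodic_reduce_to_period) simp
    then obtain u' where u': "u' \<in> {0..2*pi}" "h u = h u'" by blast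
    have "dist (\<beta> (u' + y)) (\<beta> u') < e"
      using d0 u'(1) y unfolding d_def by (auto simp: dist_real_def)
    then show ?thesis using u'(2) unfolding h_def dist_real_def by simp
  qed
  moreover have "0 < d" unfolding d_def using d0 by simp
  ultimately show ?thesis using that by blast
qed

lemma angle_antiderivative:
  obtains A where "\<And>y. \<theta> \<le> y \<Longrightarrow> (A has_real_derivative \<beta> y) (at y)"
proof -
  have "isCont \<beta> x" for x using angle_continuous continuous_on_eq_continuous_at by blast
  then obtain A where "\<And>x. x > \<theta> - 1 \<Longrightarrow> (A has_real_derivative \<beta> x) (at x)"
    using has_antiderivative_above[of "\<theta> - 1" \<beta>] by blast
  then show ?thesis using that by force
qed

lemma angle_antiderivatives:
  obtains A C where "\<And>y. \<theta> \<le> y \<Longrightarrow> (A has_real_derivative \<beta> y) (at y)"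
    and "\<And>y. \<theta> \<le> y \<Longrightarrow> (C has_real_derivative A y) (at y)"
proof -
  obtain A where A: "\<And>y. \<theta> - 1 \<le> y \<Longrightarrow> (A has_real_derivative \<beta> y) (at y)"
    using angle_antiderivative[of "\<theta> - 1"] by blast
  have "isCont A x" if "\<theta> - 1/2 \<le> x" for x by (rule DERIV_isCont[OF A]) (use that in simp)
  then obtain C where C: "\<And>x. x > \<theta> - 1/2 \<Longrightarrow> (C has_real_derivative A x) (at x)"
    using has_antiderivative_above[of "\<theta> - 1/2" A] by blast
  show ?thesis by (rule that[of A C]) (auto intro: A C)
qed

lemma sin_angle_shift_period: "sin (\<beta> (t + 2*pi) - y) = sin (\<beta> t - y)"
proof -
  have h: "\<beta> (t + 2*pi) - y = (\<beta> t - y) + of_int k * (2*pi)" using angle_quasi_periodic[of t] by simp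
  show ?thesis unfolding h by (rule periodic_plus_of_int[where p=sin, OF sin_periodic])
qed

definition correlation_integrand :: "real \<Rightarrow> real \<Rightarrow> real \<Rightarrow> real \<Rightarrow> real" where
  "correlation_integrand \<theta>1 \<theta>2 s x = sin (\<beta> (s + x - pi/2) - \<beta> (s - pi/2))
     * halfplane_diff \<theta>1 \<theta>2 s * halfplane_diff \<theta>1 \<theta>2 (s + x)"

definition arc_correlation :: "real \<Rightarrow> real \<Rightarrow> real \<Rightarrow> real" where
  "arc_correlation \<theta>1 \<theta>2 x = integral {0..2*pi} (\<lambda>s. correlation_integrand \<theta>1 \<theta>2 s x)"

lemma correlation_integrand_measurable [measurable]:
  "(\<lambda>p. correlation_integrand \<theta>1 \<theta>2 (fst p) (snd p)) \<in> borel_measurable borel"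
  "(\<lambda>s. correlation_integrand \<theta>1 \<theta>2 s x) \<in> borel_measurable borel"
  unfolding correlation_integrand_def by (subst borel_prod[symmetric], measurable)+

lemma abs_correlation_integrand_le: "\<bar>correlation_integrand \<theta>1 \<theta>2 s x\<bar> \<le> 1"
  unfolding correlation_integrand_def abs_mult
  by (intro mult_le_one abs_halfplane_diff_le abs_sin_le_one abs_ge_zero)

lemma correlation_integrand_integrable: "(\<lambda>s. correlation_integrand \<theta>1 \<theta>2 s x) integrable_on {a..b}"
  by (rule bounded_borel_integrable_on[OF _ abs_correlation_integrand_le]) measurable

lemma correlation_integrand_periodic:
  "correlation_integrand \<theta>1 \<theta>2 (s + 2*pi) x = correlation_integrand \<theta>1 \<theta>2 s x"
proof -
  have "\<beta> (s + 2*pi + x - pi/2) - \<beta> (s + 2*pi - pi/2) = \<beta> (s + x - pi/2) - \<beta> (s - pi/2)"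
    using angle_increment_periodic[of "s - pi/2" x] by (simp add: algebra_simps)
  moreover have "halfplane_diff \<theta>1 \<theta>2 (s + 2*pi + x) = halfplane_diff \<theta>1 \<theta>2 (s + x)"
    using halfplane_diff_periodic[of \<theta>1 \<theta>2 "s + x"] by (simp add: algebra_simps)
  ultimately show ?thesis unfolding correlation_integrand_def by (simp add: halfplane_diff_periodic)
qed

lemma arc_correlation_zero: "arc_correlation \<theta>1 \<theta>2 0 = 0"
  unfolding arc_correlation_def correlation_integrand_def by simp

lemma arc_correlation_minus: "arc_correlation \<theta>1 \<theta>2 (- x) = - arc_correlation \<theta>1 \<theta>2 x"
proof -
  have flip: "correlation_integrand \<theta>1 \<theta>2 (s + x) (- x) = - correlation_integrand \<theta>1 \<theta>2 s x" for s
  proof -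
    have "sin (\<beta> (s + x + - x - pi/2) - \<beta> (s + x - pi/2)) = - sin (\<beta> (s + x - pi/2) - \<beta> (s - pi/2))"
      by (simp add: sin_minus[symmetric])
    then show ?thesis unfolding correlation_integrand_def by (simp add: algebra_simps)
  qed
  have "arc_correlation \<theta>1 \<theta>2 (- x) = integral {0 - x..2*pi - x} (\<lambda>s. correlation_integrand \<theta>1 \<theta>2 (s + x) (- x))"
    unfolding arc_correlation_def by (rule integral_shift_real_ivl[symmetric])
  also have "\<dots> = integral {-x..-x + 2*pi} (\<lambda>s. - correlation_integrand \<theta>1 \<theta>2 s x)"
    by (simp add: flip)
  also have "\<dots> = integral {0..2*pi} (\<lambda>s. - correlation_integrand \<theta>1 \<theta>2 s x)"
    by (rule integral_periodic_translate)
      (auto simp: correlation_integrand_periodic intro: integrable_neg correlation_integrand_integrable)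
  also have "\<dots> = - arc_correlation \<theta>1 \<theta>2 x"
    unfolding arc_correlation_def by (simp add: integral_neg correlation_integrand_integrable)
  finally show ?thesis .
qed

lemma integral_Delta_integrand_row:
  assumes [measurable]: "\<phi> \<in> borel_measurable borel"
    and bnd: "\<And>x. \<bar>\<phi> x\<bar> \<le> B" and per: "\<And>x. \<phi> (x + 2*pi) = \<phi> x"
  shows "integral {0..2*pi} (\<lambda>t. \<phi> (t - s) * sin (\<beta> (t - pi/2) - \<beta> (s - pi/2))
      * halfplane_diff \<theta>1 \<theta>2 s * halfplane_diff \<theta>1 \<theta>2 t)
    = integral {-pi..pi} (\<lambda>x. \<phi> x * correlation_integrand \<theta>1 \<theta>2 s x)"
    (is "integral _ ?G = _")
proof -
  have "integral {0..2*pi} ?G = integral {s - pi..s - pi + 2*pi} ?G"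
  proof (rule integral_periodic_translate[symmetric])
    show "?G (t + 2*pi) = ?G t" for t
    proof -
      have "\<phi> (t + 2*pi - s) = \<phi> (t - s)" using per[of "t - s"] by (simp add: algebra_simps)
      moreover have "sin (\<beta> (t + 2*pi - pi/2) - y) = sin (\<beta> (t - pi/2) - y)" for y
        using sin_angle_shift_period[of "t - pi/2" y] by (simp add: algebra_simps)
      ultimately show ?thesis by (simp add: halfplane_diff_periodic)
    qed
    show "?G integrable_on {a..b}" for a b
    proof (rule bounded_borel_integrable_on[where B=B])
      show "\<bar>?G t\<bar> \<le> B" for t
        unfolding mult.assoc by (intro abs_mult_le_of_abs_le_one bnd abs_halfplane_diff_le abs_sin_le_one)
    qed measurable
  qed simp
  also have "\<dots> = integral {s - pi - s..s - pi + 2*pi - s} (\<lambda>x. ?G (x + s))"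
    by (rule integral_shift_real_ivl[symmetric])
  also have "\<dots> = integral {-pi..pi} (\<lambda>x. \<phi> x * correlation_integrand \<theta>1 \<theta>2 s x)"
    unfolding correlation_integrand_def by (simp add: algebra_simps)
  finally show ?thesis .
qed

lemma Delta_eq_integral_arc_correlation:
  assumes [measurable]: "\<phi> \<in> borel_measurable borel"
    and bnd: "\<And>x. \<bar>\<phi> x\<bar> \<le> B" and per: "\<And>x. \<phi> (x + 2*pi) = \<phi> x"
  shows "Delta \<phi> \<beta> \<theta>1 \<theta>2 = integral {-pi..pi} (\<lambda>x. \<phi> x * arc_correlation \<theta>1 \<theta>2 x)"
proof -
  define G where "G p = \<phi> (snd p - fst p) * sin (\<beta> (snd p - pi/2) - \<beta> (fst p - pi/2))
    * halfplane_diff \<theta>1 \<theta>2 (fst p) * halfplane_diff \<theta>1 \<theta>2 (snd p)" for p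
  define Q where "Q p = \<phi> (snd p) * correlation_integrand \<theta>1 \<theta>2 (fst p) (snd p)" for p
  have [measurable]: "G \<in> borel_measurable borel" "Q \<in> borel_measurable borel"
    unfolding G_def Q_def correlation_integrand_def by (subst borel_prod[symmetric], measurable)+
  have Gb: "\<bar>G p\<bar> \<le> B" for p
    unfolding G_def mult.assoc
    by (intro abs_mult_le_of_abs_le_one bnd abs_halfplane_diff_le abs_sin_le_one)
  have Qb: "\<bar>Q p\<bar> \<le> B" for p
    unfolding Q_def by (intro abs_mult_le_of_abs_le_one bnd abs_correlation_integrand_le)
  have inner: "integral {0..2*pi} (\<lambda>t. G (s, t)) = integral {-pi..pi} (\<lambda>x. Q (s, x))" for s
    unfolding G_def Q_def using integral_Delta_integrand_row[OF assms] by simp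
  have "Delta \<phi> \<beta> \<theta>1 \<theta>2 = integral ({0..2*pi} \<times> {0..2*pi}) G"
    unfolding Delta_eq_integral G_def by (simp add: case_prod_unfold)
  also have "\<dots> = integral {0..2*pi} (\<lambda>s. integral {0..2*pi} (\<lambda>t. G (s, t)))"
    by (rule integral_rectangle_iterated(1)[OF _ Gb]) auto
  also have "\<dots> = integral {0..2*pi} (\<lambda>s. integral {-pi..pi} (\<lambda>x. Q (s, x)))"
    by (simp add: inner)
  also have "\<dots> = integral {-pi..pi} (\<lambda>x. integral {0..2*pi} (\<lambda>s. Q (s, x)))"
    using integral_rectangle_iterated(1,2)[where g=Q, OF _ Qb, where a=0 and b="2*pi" and c="-pi" and d=pi]
    by simp
  also have "\<dots> = integral {-pi..pi} (\<lambda>x. \<phi> x * arc_correlation \<theta>1 \<theta>2 x)"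
    unfolding Q_def arc_correlation_def by simp
  finally show ?thesis .
qed

lemma weighted_arc_correlation_integrable:
  assumes [measurable]: "\<phi> \<in> borel_measurable borel" and bnd: "\<And>x. \<bar>\<phi> x\<bar> \<le> B" and "c \<le> d"
  shows "(\<lambda>x. \<phi> x * arc_correlation \<theta>1 \<theta>2 x) integrable_on {c..d}"
proof -
  define Q where "Q p = \<phi> (snd p) * correlation_integrand \<theta>1 \<theta>2 (fst p) (snd p)" for p
  have [measurable]: "Q \<in> borel_measurable borel"
    unfolding Q_def correlation_integrand_def by (subst borel_prod[symmetric], measurable)
  have Qb: "\<bar>Q p\<bar> \<le> B" for p
    unfolding Q_def by (intro abs_mult_le_of_abs_le_one bnd abs_correlation_integrand_le)
  have "(\<lambda>y. integral {0..2*pi} (\<lambda>x. Q (x, y))) integrable_on {c..d}"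
    by (rule integral_rectangle_iterated(3)[where g=Q, OF _ Qb]) (use \<open>c \<le> d\<close> in auto)
  then show ?thesis unfolding Q_def arc_correlation_def by simp
qed

lemma arc_correlation_integrable: "c \<le> d \<Longrightarrow> arc_correlation \<theta>1 \<theta>2 integrable_on {c..d}"
  using weighted_arc_correlation_integrable[of "\<lambda>_. 1" 1] by simp

lemma Delta_odd_window:
  assumes "0 < \<eta>" "\<eta> \<le> pi"
  shows "Delta (odd_window \<eta>) \<beta> \<theta>1 \<theta>2 = 2 * integral {0..\<eta>} (arc_correlation \<theta>1 \<theta>2)"
proof -
  let ?p = "\<lambda>x. odd_window \<eta> x * arc_correlation \<theta>1 \<theta>2 x"
  have int: "?p integrable_on {c..d}" if "c \<le> d" for c d
    by (rule weighted_arc_correlation_integrable[OF odd_window_measurable abs_odd_window_le[of \<eta>] that])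
  have "Delta (odd_window \<eta>) \<beta> \<theta>1 \<theta>2 = integral {-pi..pi} ?p"
    by (rule Delta_eq_integral_arc_correlation[OF odd_window_measurable abs_odd_window_le[of \<eta>] odd_window_periodic])
  also have "\<dots> = integral {-pi..0} ?p + integral {0..\<eta>} ?p + integral {\<eta>..pi} ?p"
    using Henstock_Kurzweil_Integration.integral_combine[of "-pi" 0 pi ?p]
      Henstock_Kurzweil_Integration.integral_combine[of 0 \<eta> pi ?p] int assms by simp
  also have "integral {-pi..0} ?p = integral {0..pi} ?p"
    using Henstock_Kurzweil_Integration.integral_reflect_real[where a=0 and b=pi and f="?p"]
    by (simp add: odd_window_minus arc_correlation_minus)
  also have "\<dots> = integral {0..\<eta>} ?p + integral {\<eta>..pi} ?p"
    using Henstock_Kurzweil_Integration.integral_combine[of 0 \<eta> pi ?p] int assms by simp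
  also have "integral {\<eta>..pi} ?p = 0"
    using integral_cong[of "{\<eta>..pi}" ?p "\<lambda>_. 0"] odd_window_outside assms by simp
  also have "integral {0..\<eta>} ?p = integral {0..\<eta>} (arc_correlation \<theta>1 \<theta>2)"
    by (rule integral_spike[where S="{0, \<eta>}"]) (use odd_window_inside assms in auto)
  finally show ?thesis by simp
qed

end

section \<open>Lower bounds for the arc correlation\<close>

lemma integral_correction_windows:
  assumes "pi - (\<theta>2 - \<theta>1) \<le> x" "x < pi/2" "\<theta>2 \<le> \<theta>1 + pi"
  shows "integral {\<theta>1 - pi..\<theta>1 + pi} (\<lambda>u. Mb * ((if \<theta>2 - pi - x \<le> u \<and> u \<le> \<theta>2 - pi then 1 else 0)
      + (if \<theta>2 - x \<le> u \<and> u \<le> \<theta>2 then 1 else 0))) = 2 * x * Mb"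
proof -
  have int: "(\<lambda>u. if p \<le> u \<and> u \<le> q then Mb else 0) integrable_on {a..b}" for p q a b :: real
    by (rule bounded_borel_integrable_on[where B="\<bar>Mb\<bar>"]) auto
  have "integral {\<theta>1 - pi..\<theta>1 + pi} (\<lambda>u. Mb * ((if \<theta>2 - pi - x \<le> u \<and> u \<le> \<theta>2 - pi then 1 else 0)
      + (if \<theta>2 - x \<le> u \<and> u \<le> \<theta>2 then 1 else 0)))
    = integral {\<theta>1 - pi..\<theta>1 + pi} (\<lambda>u. (if \<theta>2 - pi - x \<le> u \<and> u \<le> \<theta>2 - pi then Mb else 0)
      + (if \<theta>2 - x \<le> u \<and> u \<le> \<theta>2 then Mb else 0))"
    by (intro integral_cong) auto
  also have "\<dots> = integral {\<theta>2 - pi - x..\<theta>2 - pi} (\<lambda>u. Mb) + integral {\<theta>2 - x..\<theta>2} (\<lambda>u. Mb)"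
    unfolding integral_add[OF int int] using assms pi_gt_zero
    by (intro arg_cong2[where f="(+)"] integral_restrict_subinterval) auto
  finally show ?thesis using assms pi_gt_zero by simp
qed

context monotone_angle
begin

lemma sin_increment_bounds:
  assumes "0 \<le> x" "\<beta> (u + x) - \<beta> u \<le> 1"
  shows "0 \<le> sin (\<beta> (u + x) - \<beta> u)" "sin (\<beta> (u + x) - \<beta> u) \<le> \<beta> (u + x) - \<beta> u"
proof -
  have "0 \<le> \<beta> (u + x) - \<beta> u" using angle_le[of u "u + x"] assms(1) by simp
  then show "0 \<le> sin (\<beta> (u + x) - \<beta> u)" "sin (\<beta> (u + x) - \<beta> u) \<le> \<beta> (u + x) - \<beta> u"
    using assms(2) pi_gt3 by (auto intro!: sin_ge_zero sin_x_le_x)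
qed

lemma arc_correlation_rotated:
  "arc_correlation \<theta>1 \<theta>2 x = integral {\<theta>1 - pi..\<theta>1 + pi} (\<lambda>u. sin (\<beta> (u + x) - \<beta> u)
     * halfplane_diff \<theta>1 \<theta>2 (u + pi/2) * halfplane_diff \<theta>1 \<theta>2 (u + x + pi/2))"
proof -
  have "arc_correlation \<theta>1 \<theta>2 x
      = integral {\<theta>1 - pi/2..\<theta>1 - pi/2 + 2*pi} (\<lambda>s. correlation_integrand \<theta>1 \<theta>2 s x)"
    unfolding arc_correlation_def
    by (rule integral_periodic_translate[symmetric])
      (auto intro: correlation_integrand_periodic correlation_integrand_integrable)
  also have "\<dots> = integral {\<theta>1 - pi/2 - pi/2..\<theta>1 - pi/2 + 2*pi - pi/2}
      (\<lambda>u. correlation_integrand \<theta>1 \<theta>2 (u + pi/2) x)"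
    by (rule integral_shift_real_ivl[symmetric])
  also have "\<dots> = integral {\<theta>1 - pi..\<theta>1 + pi} (\<lambda>u. sin (\<beta> (u + x) - \<beta> u)
     * halfplane_diff \<theta>1 \<theta>2 (u + pi/2) * halfplane_diff \<theta>1 \<theta>2 (u + x + pi/2))"
  proof -
    have "\<theta>1 - pi/2 - pi/2 = \<theta>1 - pi" "\<theta>1 - pi/2 + 2*pi - pi/2 = \<theta>1 + pi" by simp_all
    moreover have "correlation_integrand \<theta>1 \<theta>2 (u + pi/2) x = sin (\<beta> (u + x) - \<beta> u)
       * halfplane_diff \<theta>1 \<theta>2 (u + pi/2) * halfplane_diff \<theta>1 \<theta>2 (u + x + pi/2)" for u
      unfolding correlation_integrand_def by (simp add: algebra_simps)
    ultimately show ?thesis by (simp only:)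
  qed
  finally show ?thesis .
qed

text \<open>The product of the two indicator differences is \<open>1\<close> on \<open>(\<theta>1, \<theta>2 - x)\<close>, and it is
  negative only when the arc is almost a half circle and \<open>u\<close> lies in one of two windows of
  length \<open>x\<close>.\<close>

lemma halfplane_product_lower_bound:
  fixes u x \<theta>1 \<theta>2 S Mb :: real
  assumes u: "\<theta>1 - pi \<le> u" "u \<le> \<theta>1 + pi" and \<theta>: "\<theta>1 < \<theta>2" "\<theta>2 \<le> \<theta>1 + pi"
    and x: "0 < x" "x < pi/2" and S: "0 \<le> S" "S \<le> Mb"
  shows "S * halfplane_diff \<theta>1 \<theta>2 (u + pi/2) * halfplane_diff \<theta>1 \<theta>2 (u + x + pi/2) \<ge>
     S * (if \<theta>1 < u \<and> u < \<theta>2 - x then 1 else 0)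
     - (if pi - (\<theta>2 - \<theta>1) \<le> x then Mb * ((if \<theta>2 - pi - x \<le> u \<and> u \<le> \<theta>2 - pi then 1 else 0)
            + (if \<theta>2 - x \<le> u \<and> u \<le> \<theta>2 then 1 else 0)) else 0)"
proof -
  define arc where "arc \<theta> v \<longleftrightarrow> (0 < \<theta> - v \<and> \<theta> - v < pi) \<or> \<theta> - v < -pi" for \<theta> v :: real
  have F0: "halfplane_diff \<theta>1 \<theta>2 (u + pi/2) = (if arc \<theta>2 u then 1 else 0) - (if arc \<theta>1 u then 1 else 0)"
    unfolding arc_def by (rule halfplane_diff_rotated) (use u \<theta> in auto)
  have F1: "halfplane_diff \<theta>1 \<theta>2 (u + x + pi/2)
      = (if arc \<theta>2 (u + x) then 1 else 0) - (if arc \<theta>1 (u + x) then 1 else 0)"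
    unfolding arc_def by (rule halfplane_diff_rotated) (use u \<theta> x pi_gt3 in auto)
  have inside: "arc \<theta>2 u \<and> \<not> arc \<theta>1 u \<and> arc \<theta>2 (u + x) \<and> \<not> arc \<theta>1 (u + x)"
    if "\<theta>1 < u" "u < \<theta>2 - x"
    using that u \<theta> x unfolding arc_def by auto
  have crossing: "pi - (\<theta>2 - \<theta>1) \<le> x \<and> ((\<theta>2 - pi - x \<le> u \<and> u \<le> \<theta>2 - pi) \<or> (\<theta>2 - x \<le> u \<and> u \<le> \<theta>2))"
    if "(arc \<theta>2 u \<and> \<not> arc \<theta>1 u \<and> \<not> arc \<theta>2 (u + x) \<and> arc \<theta>1 (u + x))
      \<or> (\<not> arc \<theta>2 u \<and> arc \<theta>1 u \<and> arc \<theta>2 (u + x) \<and> \<not> arc \<theta>1 (u + x))"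
    using that u \<theta> x unfolding arc_def by auto
  show ?thesis
    unfolding F0 F1 using inside crossing S by (auto split: if_splits)
qed

lemma arc_correlation_lower_bound:
  assumes \<theta>: "\<theta>1 < \<theta>2" "\<theta>2 \<le> \<theta>1 + pi" and x: "0 < x" "x < pi/2"
    and Mb: "\<And>u. \<beta> (u + x) - \<beta> u \<le> Mb" "Mb \<le> 1"
  shows "arc_correlation \<theta>1 \<theta>2 x \<ge> integral {\<theta>1..\<theta>2 - x} (\<lambda>u. sin (\<beta> (u + x) - \<beta> u))
      - (if pi - (\<theta>2 - \<theta>1) \<le> x then 2 * x * Mb else 0)"
proof -
  define S where "S u = sin (\<beta> (u + x) - \<beta> u)" for u
  define R1 where "R1 u = S u * (if \<theta>1 < u \<and> u < \<theta>2 - x then 1 else 0)" for u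
  define R2 where "R2 u = (if pi - (\<theta>2 - \<theta>1) \<le> x then Mb * ((if \<theta>2 - pi - x \<le> u \<and> u \<le> \<theta>2 - pi then 1 else 0)
            + (if \<theta>2 - x \<le> u \<and> u \<le> \<theta>2 then 1 else 0)) else 0)" for u
  let ?A = "\<theta>1 - pi" and ?B = "\<theta>1 + pi"
  have S: "0 \<le> S u" "S u \<le> Mb" for u
  proof -
    have "\<beta> (u + x) - \<beta> u \<le> 1" using Mb(1)[of u] Mb(2) by linarith
    with sin_increment_bounds[of x u] x Mb(1)[of u] show "0 \<le> S u" "S u \<le> Mb"
      unfolding S_def by auto
  qed
  have [measurable]: "S \<in> borel_measurable borel" "R1 \<in> borel_measurable borel" "R2 \<in> borel_measurable borel"
    unfolding S_def[abs_def] R1_def[abs_def] R2_def[abs_def] by measurable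
  have int: "f integrable_on {?A..?B}"
    if "f \<in> borel_measurable borel" "\<And>u. \<bar>f u\<bar> \<le> 2" for f :: "real \<Rightarrow> real"
    using bounded_borel_integrable_on[OF that] by blast
  have "\<bar>R1 u\<bar> \<le> 2" "\<bar>R2 u\<bar> \<le> 2" for u
    using S[of u] Mb(2) unfolding R1_def R2_def by auto
  then have iR: "R1 integrable_on {?A..?B}" "R2 integrable_on {?A..?B}"
    by (simp_all add: int)
  have "integral {?A..?B} (\<lambda>u. R1 u - R2 u)
      \<le> integral {?A..?B} (\<lambda>u. S u * halfplane_diff \<theta>1 \<theta>2 (u + pi/2) * halfplane_diff \<theta>1 \<theta>2 (u + x + pi/2))"
  proof (rule integral_le[OF integrable_diff[OF iR] int])
    show "\<bar>S u * halfplane_diff \<theta>1 \<theta>2 (u + pi/2) * halfplane_diff \<theta>1 \<theta>2 (u + x + pi/2)\<bar> \<le> 2" for u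
      using S[of u] Mb(2) by (intro abs_mult_le_of_abs_le_one abs_halfplane_diff_le) auto
    show "R1 u - R2 u \<le> S u * halfplane_diff \<theta>1 \<theta>2 (u + pi/2) * halfplane_diff \<theta>1 \<theta>2 (u + x + pi/2)"
      if "u \<in> {?A..?B}" for u
      unfolding R1_def R2_def using halfplane_product_lower_bound[of \<theta>1 u \<theta>2 x "S u" Mb] that \<theta> x S[of u]
      by auto
  qed measurable
  also have "\<dots> = arc_correlation \<theta>1 \<theta>2 x" unfolding S_def arc_correlation_rotated ..
  finally have "integral {?A..?B} R1 - integral {?A..?B} R2 \<le> arc_correlation \<theta>1 \<theta>2 x"
    by (simp add: integral_diff[OF iR])
  moreover have "integral {?A..?B} R1 = integral {\<theta>1..\<theta>2 - x} S"
  proof -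
    have "integral {?A..?B} R1 = integral {?A..?B} (\<lambda>u. if \<theta>1 \<le> u \<and> u \<le> \<theta>2 - x then S u else 0)"
      by (rule integral_spike[where S="{\<theta>1, \<theta>2 - x}"]) (auto simp: R1_def)
    also have "\<dots> = integral {\<theta>1..\<theta>2 - x} S"
      using \<theta> x pi_gt3 by (intro integral_restrict_subinterval) auto
    finally show ?thesis .
  qed
  moreover have "integral {?A..?B} R2 = (if pi - (\<theta>2 - \<theta>1) \<le> x then 2 * x * Mb else 0)"
    unfolding R2_def[abs_def] using integral_correction_windows[of \<theta>2 \<theta>1 x Mb] \<theta> x by auto
  ultimately show ?thesis unfolding S_def by simp
qed

lemma sin_increment_integrable: "(\<lambda>u. sin (\<beta> (u + x) - \<beta> u)) integrable_on {a..b}"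
  by (rule integrable_continuous_real)
    (intro continuous_intros continuous_on_compose2[OF angle_continuous], auto)

lemma integral_sin_increment_nonneg:
  assumes "0 \<le> x" "\<And>u. \<beta> (u + x) - \<beta> u \<le> 1"
  shows "0 \<le> integral {a..b} (\<lambda>u. sin (\<beta> (u + x) - \<beta> u))"
  using sin_increment_bounds(1)[OF assms(1,2)] by (intro integral_nonneg[OF sin_increment_integrable])

lemma integral_sin_increment_ge:
  assumes x: "0 \<le> x" "\<theta>1 \<le> \<theta>2 - x" and small: "\<And>u. \<beta> (u + x) - \<beta> u \<le> 1"
    and A: "\<And>y. \<theta>1 \<le> y \<Longrightarrow> (A has_real_derivative \<beta> y) (at y)"
  shows "(A \<theta>2 - A (\<theta>2 - x) - A (\<theta>1 + x) + A \<theta>1) / 2 \<le> integral {\<theta>1..\<theta>2 - x} (\<lambda>u. sin (\<beta> (u + x) - \<beta> u))"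
proof -
  have "((\<lambda>u. \<beta> (u + x) - \<beta> u) has_integral (A (\<theta>2 - x + x) - A (\<theta>2 - x)) - (A (\<theta>1 + x) - A \<theta>1))
      {\<theta>1..\<theta>2 - x}"
  proof (rule has_integral_of_real_derivative[OF x(2)])
    fix u assume "u \<in> {\<theta>1..\<theta>2 - x}"
    then show "((\<lambda>u. A (u + x) - A u) has_real_derivative \<beta> (u + x) - \<beta> u) (at u)"
      using x A[of "u + x"] by (auto intro!: derivative_eq_intros A simp flip: DERIV_shift)
  qed
  then have "((\<lambda>u. (\<beta> (u + x) - \<beta> u) / 2) has_integral (A \<theta>2 - A (\<theta>2 - x) - A (\<theta>1 + x) + A \<theta>1) / 2)
      {\<theta>1..\<theta>2 - x}"
    by (simp add: has_integral_divide algebra_simps)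
  then show ?thesis
  proof (rule has_integral_le[OF _ integrable_integral[OF sin_increment_integrable]])
    fix u
    show "(\<beta> (u + x) - \<beta> u) / 2 \<le> sin (\<beta> (u + x) - \<beta> u)"
      using angle_le[of u "u + x"] x(1) small[of u] by (intro half_le_sin) auto
  qed
qed

lemma antiderivative_window_ge:
  assumes x: "0 \<le> x" "\<theta>1 + x \<le> \<theta>2 - x"
    and A: "\<And>y. \<theta>1 \<le> y \<Longrightarrow> (A has_real_derivative \<beta> y) (at y)"
  shows "x * (\<beta> (\<theta>2 - x) - \<beta> (\<theta>1 + x)) \<le> A \<theta>2 - A (\<theta>2 - x) - A (\<theta>1 + x) + A \<theta>1"
proof -
  have upper: "(\<beta> has_integral A \<theta>2 - A (\<theta>2 - x)) {\<theta>2 - x..\<theta>2}"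
    using x by (intro has_integral_of_real_derivative A) auto
  have lower: "(\<beta> has_integral A (\<theta>1 + x) - A \<theta>1) {\<theta>1..\<theta>1 + x}"
    using x by (intro has_integral_of_real_derivative A) auto
  have "x * \<beta> (\<theta>2 - x) \<le> A \<theta>2 - A (\<theta>2 - x)"
    using has_integral_le[OF has_integral_const_real upper, of "\<beta> (\<theta>2 - x)"] x angle_le by auto
  moreover have "A (\<theta>1 + x) - A \<theta>1 \<le> x * \<beta> (\<theta>1 + x)"
    using has_integral_le[OF lower has_integral_const_real, of "\<beta> (\<theta>1 + x)"] x angle_le by auto
  ultimately show ?thesis by (simp add: algebra_simps)
qed

lemma continuous_on_abs_angle_diff: "continuous_on S (\<lambda>(s, t). \<bar>\<beta> t - \<beta> s\<bar>)"
  unfolding case_prod_unfold by (intro continuous_intros continuous_on_compose2[OF angle_continuous]) auto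

lemma Lambda_nonneg: "0 \<le> Lambda \<beta> \<theta>1 \<theta>2"
proof -
  let ?a = "min \<theta>1 \<theta>2" and ?b = "max \<theta>1 \<theta>2"
  have "{?a..?b} \<times> {?a..?b} = cbox (?a, ?a) (?b, ?b)" by (simp add: cbox_Pair_eq)
  then show ?thesis unfolding Lambda_def
    by (metis (no_types, lifting) abs_ge_zero case_prod_beta continuous_on_abs_angle_diff
        integrable_continuous integral_nonneg)
qed

lemma Lambda_le:
  assumes "\<theta>1 \<le> \<theta>2"
  shows "Lambda \<beta> \<theta>1 \<theta>2 \<le> (\<theta>2 - \<theta>1)\<^sup>2 * (\<beta> \<theta>2 - \<beta> \<theta>1)"
proof -
  have "norm (integral (cbox (\<theta>1, \<theta>1) (\<theta>2, \<theta>2)) (\<lambda>(s, t). \<bar>\<beta> t - \<beta> s\<bar>))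
      \<le> (\<beta> \<theta>2 - \<beta> \<theta>1) * measure lborel (cbox (\<theta>1, \<theta>1) (\<theta>2, \<theta>2))"
  proof (rule has_integral_bound[OF _ integrable_integral[OF integrable_continuous[OF continuous_on_abs_angle_diff]]])
    show "0 \<le> \<beta> \<theta>2 - \<beta> \<theta>1" using angle_le[OF assms] by simp
    fix p assume "p \<in> cbox (\<theta>1, \<theta>1) (\<theta>2, \<theta>2)"
    moreover obtain s t where "p = (s, t)" by (cases p)
    ultimately have "s \<in> {\<theta>1..\<theta>2}" "t \<in> {\<theta>1..\<theta>2}" by (auto simp: cbox_Pair_eq)
    then show "norm ((\<lambda>(s, t). \<bar>\<beta> t - \<beta> s\<bar>) p) \<le> \<beta> \<theta>2 - \<beta> \<theta>1"
      using \<open>p = (s, t)\<close> angle_le[of \<theta>1 s] angle_le[of s \<theta>2] angle_le[of \<theta>1 t] angle_le[of t \<theta>2]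
      by auto
  qed
  moreover have "measure lborel (cbox (\<theta>1, \<theta>1) (\<theta>2, \<theta>2)) = (\<theta>2 - \<theta>1)\<^sup>2"
    using content_Pair[of \<theta>1 \<theta>1 \<theta>2 \<theta>2] assms by (simp add: power2_eq_square)
  ultimately show ?thesis
    using assms unfolding Lambda_def by (simp add: cbox_Pair_eq mult.commute)
qed

lemma integral_abs_angle_diff:
  assumes s: "\<theta>1 \<le> s" "s \<le> \<theta>2"
    and A: "\<And>y. \<theta>1 \<le> y \<Longrightarrow> (A has_real_derivative \<beta> y) (at y)"
  shows "integral {\<theta>1..\<theta>2} (\<lambda>t. \<bar>\<beta> t - \<beta> s\<bar>) = (2 * s - \<theta>1 - \<theta>2) * \<beta> s - 2 * A s + A \<theta>1 + A \<theta>2"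
proof -
  have "continuous_on {\<theta>1..\<theta>2} (\<lambda>t. \<bar>\<beta> t - \<beta> s\<bar>)"
    by (intro continuous_intros continuous_on_compose2[OF angle_continuous]) auto
  from integrable_continuous_real[OF this] have split: "integral {\<theta>1..\<theta>2} (\<lambda>t. \<bar>\<beta> t - \<beta> s\<bar>)
      = integral {\<theta>1..s} (\<lambda>t. \<bar>\<beta> t - \<beta> s\<bar>) + integral {s..\<theta>2} (\<lambda>t. \<bar>\<beta> t - \<beta> s\<bar>)"
    using Henstock_Kurzweil_Integration.integral_combine[of \<theta>1 s \<theta>2 "\<lambda>t. \<bar>\<beta> t - \<beta> s\<bar>"] s
    by simp
  have "integral {\<theta>1..s} (\<lambda>t. \<bar>\<beta> t - \<beta> s\<bar>) = integral {\<theta>1..s} (\<lambda>t. \<beta> s - \<beta> t)"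
    by (rule integral_cong) (use angle_le in auto)
  also have "\<dots> = (s * \<beta> s - A s) - (\<theta>1 * \<beta> s - A \<theta>1)"
    using s by (intro integral_of_real_derivative) (auto intro!: derivative_eq_intros A)
  finally have left: "integral {\<theta>1..s} (\<lambda>t. \<bar>\<beta> t - \<beta> s\<bar>) = (s * \<beta> s - A s) - (\<theta>1 * \<beta> s - A \<theta>1)" .
  have "integral {s..\<theta>2} (\<lambda>t. \<bar>\<beta> t - \<beta> s\<bar>) = integral {s..\<theta>2} (\<lambda>t. \<beta> t - \<beta> s)"
    by (rule integral_cong) (use angle_le in auto)
  also have "\<dots> = (A \<theta>2 - \<theta>2 * \<beta> s) - (A s - s * \<beta> s)"
    using s by (intro integral_of_real_derivative) (auto intro!: derivative_eq_intros A)
  finally have right: "integral {s..\<theta>2} (\<lambda>t. \<bar>\<beta> t - \<beta> s\<bar>) = (A \<theta>2 - \<theta>2 * \<beta> s) - (A s - s * \<beta> s)" .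
  show ?thesis unfolding split left right by (simp add: algebra_simps)
qed

lemma Lambda_eq_antiderivatives:
  assumes \<theta>: "\<theta>1 < \<theta>2"
    and A: "\<And>y. \<theta>1 \<le> y \<Longrightarrow> (A has_real_derivative \<beta> y) (at y)"
    and C: "\<And>y. \<theta>1 \<le> y \<Longrightarrow> (C has_real_derivative A y) (at y)"
  shows "Lambda \<beta> \<theta>1 \<theta>2 = 2 * (\<theta>2 - \<theta>1) * (A \<theta>1 + A \<theta>2) - 4 * (C \<theta>2 - C \<theta>1)"
proof -
  have "Lambda \<beta> \<theta>1 \<theta>2 = integral {\<theta>1..\<theta>2} (\<lambda>s. integral {\<theta>1..\<theta>2} (\<lambda>t. \<bar>\<beta> t - \<beta> s\<bar>))"
    using integral_prod_continuous[OF continuous_on_abs_angle_diff] \<theta>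
    unfolding Lambda_def by (simp add: cbox_Pair_eq)
  also have "\<dots> = integral {\<theta>1..\<theta>2} (\<lambda>s. (2 * s - \<theta>1 - \<theta>2) * \<beta> s - 2 * A s + A \<theta>1 + A \<theta>2)"
    using integral_abs_angle_diff[OF _ _ A] by (intro integral_cong) auto
  also have "\<dots> = ((2 * \<theta>2 - \<theta>1 - \<theta>2) * A \<theta>2 - 4 * C \<theta>2 + (A \<theta>1 + A \<theta>2) * \<theta>2)
      - ((2 * \<theta>1 - \<theta>1 - \<theta>2) * A \<theta>1 - 4 * C \<theta>1 + (A \<theta>1 + A \<theta>2) * \<theta>1)"
  proof (rule integral_of_real_derivative)
    show "\<theta>1 \<le> \<theta>2" using \<theta> by simp
    fix s assume "s \<in> {\<theta>1..\<theta>2}"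
    then have "((\<lambda>s. (2 * s - \<theta>1 - \<theta>2) * A s - 4 * C s + (A \<theta>1 + A \<theta>2) * s) has_real_derivative
       (2 * A s + (2 * s - \<theta>1 - \<theta>2) * \<beta> s - 4 * A s + (A \<theta>1 + A \<theta>2))) (at s)"
      by (auto intro!: derivative_eq_intros A C)
    then show "((\<lambda>s. (2 * s - \<theta>1 - \<theta>2) * A s - 4 * C s + (A \<theta>1 + A \<theta>2) * s) has_real_derivative
       (2 * s - \<theta>1 - \<theta>2) * \<beta> s - 2 * A s + A \<theta>1 + A \<theta>2) (at s)"
      by (simp add: algebra_simps)
  qed
  finally show ?thesis by (simp add: algebra_simps)
qed

lemma integral_antiderivative_window:
  assumes \<theta>: "\<theta>1 \<le> \<theta>2"
    and A: "\<And>y. \<theta>1 \<le> y \<Longrightarrow> (A has_real_derivative \<beta> y) (at y)"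
    and C: "\<And>y. \<theta>1 \<le> y \<Longrightarrow> (C has_real_derivative A y) (at y)"
  shows "((\<lambda>x. A \<theta>2 - A (\<theta>2 - x) - A (\<theta>1 + x) + A \<theta>1) has_integral
      (\<theta>2 - \<theta>1) * (A \<theta>1 + A \<theta>2) - 2 * (C \<theta>2 - C \<theta>1)) {0..\<theta>2 - \<theta>1}"
proof -
  have "((\<lambda>x. A \<theta>2 - A (\<theta>2 - x) - A (\<theta>1 + x) + A \<theta>1) has_integral
      (let F = \<lambda>x. x * (A \<theta>1 + A \<theta>2) + C (\<theta>2 - x) - C (\<theta>1 + x) in F (\<theta>2 - \<theta>1) - F 0)) {0..\<theta>2 - \<theta>1}"
    unfolding Let_def
  proof (rule has_integral_of_real_derivative)
    fix x assume x: "x \<in> {0..\<theta>2 - \<theta>1}"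
    have "((\<lambda>z. C (z + \<theta>1)) has_real_derivative A (x + \<theta>1)) (at x)"
      using C[of "x + \<theta>1"] x by (simp add: DERIV_shift)
    then have "((\<lambda>z. C (\<theta>1 + z)) has_real_derivative A (\<theta>1 + x)) (at x)"
      by (simp add: add.commute)
    moreover have "((\<lambda>z. C (\<theta>2 - z)) has_real_derivative A (\<theta>2 - x) * (-1)) (at x)"
      by (rule DERIV_chain2[where f=C and g="\<lambda>z. \<theta>2 - z"]) (use C x in \<open>auto intro!: derivative_eq_intros\<close>)
    ultimately show "((\<lambda>x. x * (A \<theta>1 + A \<theta>2) + C (\<theta>2 - x) - C (\<theta>1 + x)) has_real_derivative
        A \<theta>2 - A (\<theta>2 - x) - A (\<theta>1 + x) + A \<theta>1) (at x)"
      by (auto intro!: derivative_eq_intros)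
  qed (use \<theta> in simp)
  then show ?thesis by (simp add: algebra_simps)
qed

end

section \<open>The main estimate\<close>

locale monotone_angle_window = monotone_angle +
  fixes \<eta> m1 m2 M :: real
  assumes window_pos: "0 < \<eta>" and window_le: "\<eta> \<le> pi/4"
    and small_increment: "\<And>u y. 0 \<le> y \<Longrightarrow> y \<le> \<eta> \<Longrightarrow> \<beta> (u + y) - \<beta> u \<le> min 1 (m2/8)"
    and m1_pos: "0 < m1" and m1_le: "\<And>u. m1 \<le> \<beta> (u + \<eta>/3) - \<beta> u"
    and m2_pos: "0 < m2" and m2_le: "\<And>u. m2 \<le> \<beta> (u + pi/4) - \<beta> u"
    and half_turn_le: "\<And>u. \<beta> (u + pi) - \<beta> u \<le> M"
begin

lemma increment_le_one: "0 \<le> y \<Longrightarrow> y \<le> \<eta> \<Longrightarrow> \<beta> (u + y) - \<beta> u \<le> 1"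
  using small_increment[of y u] by simp

lemma increment_ge: "u + y \<le> v \<Longrightarrow> \<beta> (u + y) - \<beta> u \<le> \<beta> v - \<beta> u"
  using angle_le by simp

lemma sin_integral_ge_increment:
  assumes x: "0 < x" "x \<le> \<eta>" and far: "\<theta>1 + x + \<delta> \<le> \<theta>2 - x" "0 \<le> \<delta>"
    and m: "\<And>u. m \<le> \<beta> (u + \<delta>) - \<beta> u"
  shows "x * m \<le> 2 * integral {\<theta>1..\<theta>2 - x} (\<lambda>u. sin (\<beta> (u + x) - \<beta> u))"
proof -
  obtain A where A: "\<And>y. \<theta>1 \<le> y \<Longrightarrow> (A has_real_derivative \<beta> y) (at y)"
    using angle_antiderivative[of \<theta>1] by blast
  have inside: "\<theta>1 + x \<le> \<theta>2 - x" using far by linarith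
  have "x * m \<le> x * (\<beta> (\<theta>2 - x) - \<beta> (\<theta>1 + x))"
    using m[of "\<theta>1 + x"] increment_ge[OF far(1)] x by (intro mult_left_mono) auto
  also have "\<dots> \<le> A \<theta>2 - A (\<theta>2 - x) - A (\<theta>1 + x) + A \<theta>1"
    using x inside by (intro antiderivative_window_ge A) auto
  also have "\<dots> \<le> 2 * integral {\<theta>1..\<theta>2 - x} (\<lambda>u. sin (\<beta> (u + x) - \<beta> u))"
    using integral_sin_increment_ge[of x \<theta>1 \<theta>2 A] increment_le_one x inside A by force
  finally show ?thesis .
qed

context
  fixes \<theta>1 \<theta>2 :: real
  assumes arc: "\<theta>1 < \<theta>2" "\<theta>2 \<le> \<theta>1 + pi"
begin

lemma arc_correlation_ge_sin_integral:
  assumes "0 < x" "x \<le> \<eta>"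
  shows "integral {\<theta>1..\<theta>2 - x} (\<lambda>u. sin (\<beta> (u + x) - \<beta> u))
      - (if pi - (\<theta>2 - \<theta>1) \<le> x then x * m2 / 4 else 0) \<le> arc_correlation \<theta>1 \<theta>2 x"
proof -
  have "2 * x * min 1 (m2 / 8) \<le> x * m2 / 4" using assms by (simp add: min_def)
  moreover have "integral {\<theta>1..\<theta>2 - x} (\<lambda>u. sin (\<beta> (u + x) - \<beta> u))
      - (if pi - (\<theta>2 - \<theta>1) \<le> x then 2 * x * min 1 (m2 / 8) else 0) \<le> arc_correlation \<theta>1 \<theta>2 x"
    using assms window_le pi_gt3
    by (intro arc_correlation_lower_bound arc small_increment) auto
  ultimately show ?thesis by (auto split: if_splits)
qed

text \<open>Near the antipodal configuration the correction term is absorbed, because the arc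
  then has length at least \<open>3\<pi>/4\<close>.\<close>

lemma arc_correlation_near_antipodal:
  assumes x: "0 < x" "x \<le> \<eta>" and near: "pi - (\<theta>2 - \<theta>1) \<le> x"
  shows "x * m2 / 4 \<le> arc_correlation \<theta>1 \<theta>2 x"
proof -
  have "\<theta>1 + x + pi/4 \<le> \<theta>2 - x" using x near window_le by linarith
  then have "x * m2 \<le> 2 * integral {\<theta>1..\<theta>2 - x} (\<lambda>u. sin (\<beta> (u + x) - \<beta> u))"
    by (rule sin_integral_ge_increment[OF x _ _ m2_le]) simp
  then show ?thesis using arc_correlation_ge_sin_integral[OF x] near by simp
qed

lemma arc_correlation_nonneg:
  assumes "0 < x" "x \<le> \<eta>"
  shows "0 \<le> arc_correlation \<theta>1 \<theta>2 x"
proof (cases "pi - (\<theta>2 - \<theta>1) \<le> x")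
  case True
  have "0 \<le> x * m2 / 4" using assms m2_pos by simp
  with arc_correlation_near_antipodal[OF assms True] show ?thesis by linarith
next
  case False
  have "0 \<le> integral {\<theta>1..\<theta>2 - x} (\<lambda>u. sin (\<beta> (u + x) - \<beta> u))"
    using assms by (intro integral_sin_increment_nonneg increment_le_one) auto
  then show ?thesis using arc_correlation_ge_sin_integral[OF assms] False by simp
qed

lemma arc_correlation_ge_short:
  assumes short: "\<theta>2 - \<theta>1 \<le> \<eta>" and x: "0 \<le> x" "x \<le> \<theta>2 - \<theta>1"
    and A: "\<And>y. \<theta>1 \<le> y \<Longrightarrow> (A has_real_derivative \<beta> y) (at y)"
  shows "(A \<theta>2 - A (\<theta>2 - x) - A (\<theta>1 + x) + A \<theta>1) / 2 \<le> arc_correlation \<theta>1 \<theta>2 x"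
proof (cases "x = 0")
  case True
  then show ?thesis by (simp add: arc_correlation_zero)
next
  case False
  then have x': "0 < x" "x \<le> \<eta>" using x short by auto
  have "\<not> pi - (\<theta>2 - \<theta>1) \<le> x" using x short window_le pi_gt_zero by linarith
  moreover have "(A \<theta>2 - A (\<theta>2 - x) - A (\<theta>1 + x) + A \<theta>1) / 2
      \<le> integral {\<theta>1..\<theta>2 - x} (\<lambda>u. sin (\<beta> (u + x) - \<beta> u))"
    using x x' by (intro integral_sin_increment_ge increment_le_one A) auto
  ultimately show ?thesis using arc_correlation_ge_sin_integral[OF x'] by simp
qed

lemma arc_correlation_ge_long:
  assumes long: "\<eta> < \<theta>2 - \<theta>1" and x: "0 \<le> x" "x \<le> \<eta>/3"
  shows "min m1 m2 / 4 * x \<le> arc_correlation \<theta>1 \<theta>2 x"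
proof (cases "x = 0")
  case True
  then show ?thesis by (simp add: arc_correlation_zero)
next
  case False
  then have x': "0 < x" "x \<le> \<eta>" using x window_pos by auto
  show ?thesis
  proof (cases "pi - (\<theta>2 - \<theta>1) \<le> x")
    case True
    then show ?thesis using arc_correlation_near_antipodal[OF x'] x' by (auto intro: order_trans[rotated])
  next
    case False
    have "\<theta>1 + x + \<eta>/3 \<le> \<theta>2 - x" using x long by auto
    then have "x * m1 \<le> 2 * integral {\<theta>1..\<theta>2 - x} (\<lambda>u. sin (\<beta> (u + x) - \<beta> u))"
      using window_pos by (intro sin_integral_ge_increment[OF x' _ _ m1_le]) auto
    moreover have "x * min m1 m2 \<le> x * m1" using x by (simp add: mult_left_mono)
    moreover have "0 \<le> x * min m1 m2" using x m1_pos m2_pos by simp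
    ultimately show ?thesis using arc_correlation_ge_sin_integral[OF x'] False by (simp add: mult.commute)
  qed
qed

lemma Delta_ge_Lambda_short:
  assumes short: "\<theta>2 - \<theta>1 \<le> \<eta>"
  shows "Lambda \<beta> \<theta>1 \<theta>2 / 2 \<le> Delta (odd_window \<eta>) \<beta> \<theta>1 \<theta>2"
proof -
  define d where "d = \<theta>2 - \<theta>1"
  obtain A C where A: "\<And>y. \<theta>1 \<le> y \<Longrightarrow> (A has_real_derivative \<beta> y) (at y)"
    and C: "\<And>y. \<theta>1 \<le> y \<Longrightarrow> (C has_real_derivative A y) (at y)"
    using angle_antiderivatives[of \<theta>1] by blast
  define T where "T x = A \<theta>2 - A (\<theta>2 - x) - A (\<theta>1 + x) + A \<theta>1" for x
  have d: "0 < d" "d \<le> \<eta>" unfolding d_def using arc short by auto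
  have T: "(T has_integral d * (A \<theta>1 + A \<theta>2) - 2 * (C \<theta>2 - C \<theta>1)) {0..d}"
    unfolding T_def d_def by (rule integral_antiderivative_window[OF _ A C]) (use arc in auto)
  have J_int: "arc_correlation \<theta>1 \<theta>2 integrable_on {a..b}" if "a \<le> b" for a b
    using arc_correlation_integrable that .
  have "Lambda \<beta> \<theta>1 \<theta>2 / 4 = integral {0..d} (\<lambda>x. T x / 2)"
    using Lambda_eq_antiderivatives[OF arc(1) A C] integral_unique[OF has_integral_divide[OF T, of 2]]
    unfolding d_def by (simp add: algebra_simps)
  also have "\<dots> \<le> integral {0..d} (arc_correlation \<theta>1 \<theta>2)"
    using arc_correlation_ge_short[OF short _ _ A, folded T_def] d
    by (intro integral_le[OF _ J_int] has_integral_integrable[OF has_integral_divide[OF T]]) (auto simp: d_def)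
  also have "\<dots> \<le> integral {0..d} (arc_correlation \<theta>1 \<theta>2) + integral {d..\<eta>} (arc_correlation \<theta>1 \<theta>2)"
    using integral_nonneg[OF J_int, of d \<eta>] arc_correlation_nonneg d by simp
  also have "\<dots> = integral {0..\<eta>} (arc_correlation \<theta>1 \<theta>2)"
    using Henstock_Kurzweil_Integration.integral_combine[OF _ _ J_int, of 0 d \<eta>] d by simp
  finally show ?thesis
    using Delta_odd_window[of \<eta>] window_pos window_le by simp
qed

lemma Delta_ge_long:
  assumes long: "\<eta> < \<theta>2 - \<theta>1"
  shows "min m1 m2 * \<eta>\<^sup>2 / 36 \<le> Delta (odd_window \<eta>) \<beta> \<theta>1 \<theta>2"
proof -
  define mm where "mm = min m1 m2"
  have J_int: "arc_correlation \<theta>1 \<theta>2 integrable_on {a..b}" if "a \<le> b" for a b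
    using arc_correlation_integrable that .
  have "((\<lambda>x. mm / 4 * x) has_integral mm / 8 * (\<eta>/3)\<^sup>2 - mm / 8 * 0\<^sup>2) {0..\<eta>/3}"
    using window_pos by (intro has_integral_of_real_derivative) (auto intro!: derivative_eq_intros)
  then have lin: "((\<lambda>x. mm / 4 * x) has_integral mm * \<eta>\<^sup>2 / 72) {0..\<eta>/3}"
    by (simp add: power2_eq_square)
  have "mm * \<eta>\<^sup>2 / 72 \<le> integral {0..\<eta>/3} (arc_correlation \<theta>1 \<theta>2)"
    using arc_correlation_ge_long[OF long, folded mm_def] window_pos
    by (intro has_integral_le[OF lin integrable_integral[OF J_int]]) auto
  also have "\<dots> \<le> integral {0..\<eta>/3} (arc_correlation \<theta>1 \<theta>2) + integral {\<eta>/3..\<eta>} (arc_correlation \<theta>1 \<theta>2)"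
    using integral_nonneg[OF J_int, of "\<eta>/3" \<eta>] arc_correlation_nonneg window_pos by simp
  also have "\<dots> = integral {0..\<eta>} (arc_correlation \<theta>1 \<theta>2)"
    using Henstock_Kurzweil_Integration.integral_combine[OF _ _ J_int, of 0 "\<eta>/3" \<eta>] window_pos by simp
  finally show ?thesis
    using Delta_odd_window[of \<eta>] window_pos window_le unfolding mm_def by simp
qed

lemma Delta_ge_Lambda_ordered:
  "min (1/2) (min m1 m2 * \<eta>\<^sup>2 / (36 * pi\<^sup>2 * M)) * Lambda \<beta> \<theta>1 \<theta>2 \<le> Delta (odd_window \<eta>) \<beta> \<theta>1 \<theta>2"
proof -
  let ?c = "min (1/2) (min m1 m2 * \<eta>\<^sup>2 / (36 * pi\<^sup>2 * M))"
  have M: "0 < M" using half_turn_le[of 0] angle_less[of 0 pi] by simp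
  show ?thesis
  proof (cases "\<theta>2 - \<theta>1 \<le> \<eta>")
    case True
    have "?c * Lambda \<beta> \<theta>1 \<theta>2 \<le> 1/2 * Lambda \<beta> \<theta>1 \<theta>2"
      by (rule mult_right_mono[OF min.cobounded1 Lambda_nonneg])
    then show ?thesis using Delta_ge_Lambda_short[OF True] by linarith
  next
    case False
    have "Lambda \<beta> \<theta>1 \<theta>2 \<le> pi\<^sup>2 * M"
    proof -
      have "(\<theta>2 - \<theta>1)\<^sup>2 \<le> pi\<^sup>2" using arc by (simp add: power_mono)
      moreover have "\<beta> \<theta>2 - \<beta> \<theta>1 \<le> M"
        using half_turn_le[of \<theta>1] angle_le[of \<theta>2 "\<theta>1 + pi"] arc by simp
      moreover have "0 \<le> \<beta> \<theta>2 - \<beta> \<theta>1" using angle_le[of \<theta>1 \<theta>2] arc by simp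
      ultimately show ?thesis
        using Lambda_le[of \<theta>1 \<theta>2] arc by (smt (verit) mult_mono zero_le_power2)
    qed
    then have "?c * Lambda \<beta> \<theta>1 \<theta>2 \<le> min m1 m2 * \<eta>\<^sup>2 / (36 * pi\<^sup>2 * M) * (pi\<^sup>2 * M)"
      using Lambda_nonneg m1_pos m2_pos M by (intro mult_mono) auto
    also have "\<dots> = min m1 m2 * \<eta>\<^sup>2 / 36" using M by (simp add: field_simps)
    finally show ?thesis using Delta_ge_long False by linarith
  qed
qed

end

lemma Delta_ge_Lambda:
  assumes "\<bar>\<theta>1 - \<theta>2\<bar> \<le> pi"
  shows "min (1/2) (min m1 m2 * \<eta>\<^sup>2 / (36 * pi\<^sup>2 * M)) * Lambda \<beta> \<theta>1 \<theta>2 \<le> Delta (odd_window \<eta>) \<beta> \<theta>1 \<theta>2"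
  using assms Delta_ge_Lambda_ordered[of \<theta>1 \<theta>2] Delta_ge_Lambda_ordered[of \<theta>2 \<theta>1]
  by (cases \<theta>1 \<theta>2 rule: linorder_cases) (auto simp: Delta_swap Lambda_swap Delta_same Lambda_same)

end

lemma (in monotone_angle) Delta_odd_window_ge_Lambda:
  obtains \<eta> c where "0 < \<eta>" "\<eta> \<le> pi" "0 < c"
    "\<And>\<theta>1 \<theta>2. \<bar>\<theta>1 - \<theta>2\<bar> \<le> pi \<Longrightarrow> c * Lambda \<beta> \<theta>1 \<theta>2 \<le> Delta (odd_window \<eta>) \<beta> \<theta>1 \<theta>2"
proof -
  obtain m2 where m2: "0 < m2" "\<And>u. m2 \<le> \<beta> (u + pi/4) - \<beta> u"
    using angle_increment_lower[of "pi/4"] by auto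
  obtain M where M: "\<And>u. \<beta> (u + pi) - \<beta> u \<le> M"
    using angle_increment_upper[of pi] by blast
  obtain d where d: "0 < d" "\<And>u y. 0 \<le> y \<Longrightarrow> y \<le> d \<Longrightarrow> \<beta> (u + y) - \<beta> u \<le> min 1 (m2/8)"
    using angle_increment_small[of "min 1 (m2/8)"] m2 by auto
  define \<eta> where "\<eta> = min d (pi/4)"
  have \<eta>: "0 < \<eta>" "\<eta> \<le> pi/4" unfolding \<eta>_def using d by auto
  obtain m1 where m1: "0 < m1" "\<And>u. m1 \<le> \<beta> (u + \<eta>/3) - \<beta> u"
    using angle_increment_lower[of "\<eta>/3"] \<eta> by auto
  interpret monotone_angle_window \<beta> k \<eta> m1 m2 M
    by unfold_locales (use \<eta> m1 m2 M d in \<open>auto simp: \<eta>_def\<close>)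
  have "0 < M" using M[of 0] angle_less[of 0 pi] by simp
  then have "0 < min (1/2) (min m1 m2 * \<eta>\<^sup>2 / (36 * pi\<^sup>2 * M))" using m1 m2 \<eta> by simp
  moreover have "\<eta> \<le> pi" using \<eta> by simp
  ultimately show ?thesis using that[OF \<eta>(1)] Delta_ge_Lambda by blast
qed

theorem lemma5p7:
  fixes N :: "complex \<Rightarrow> real" and \<gamma> :: "real \<Rightarrow> complex" and \<alpha> :: "real \<Rightarrow> real"
  assumes "is_norm2 N"
    and "strictly_convex_norm N"
    and "C1_off_origin N"
    and "\<forall>t. \<gamma> (t + 2*pi) = \<gamma> t"
    and "inj_on \<gamma> {0..<2*pi}"
    and "range \<gamma> = {z. N z = 1}"
    and "\<forall>t. (\<gamma> has_vector_derivative cis (\<alpha> t)) (at t)"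
    and "continuous_on UNIV \<alpha>"
    and "winding_number (\<lambda>u. \<gamma> (2 * pi * u)) 0 = 1"
  shows "\<exists>(\<phi>::real \<Rightarrow> real) (c::real). c > 0
     \<and> (\<forall>x. \<phi> (- x) = - \<phi> x) \<and> (\<forall>x. \<phi> (x + 2*pi) = \<phi> x) \<and> bv_on \<phi> 0 (2*pi)
     \<and> (\<forall>\<theta>1 \<theta>2. \<bar>\<theta>1 - \<theta>2\<bar> \<le> pi \<longrightarrow> Delta \<phi> \<alpha> \<theta>1 \<theta>2 \<ge> c * Lambda \<alpha> \<theta>1 \<theta>2)"
proof -
  obtain D :: "complex \<Rightarrow> (complex \<Rightarrow>\<^sub>L real)"
    where "\<And>x. x \<noteq> 0 \<Longrightarrow> (N has_derivative blinfun_apply (D x)) (at x)"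
    using assms(3) unfolding C1_off_origin_def by blast
  then interpret unit_sphere_curve N \<gamma> \<alpha> D
    using assms by unfold_locales auto
  obtain \<epsilon> :: real and k :: int where \<epsilon>: "\<epsilon> = 1 \<or> \<epsilon> = -1"
    and lift: "monotone_angle (\<lambda>u. \<epsilon> * \<alpha> u) k"
    using monotone_angle_lift by blast
  obtain \<eta> c where \<eta>: "0 < \<eta>" "\<eta> \<le> pi" and "0 < c" and estimate:
    "\<And>\<theta>1 \<theta>2. \<bar>\<theta>1 - \<theta>2\<bar> \<le> pi \<Longrightarrow>
       c * Lambda (\<lambda>u. \<epsilon> * \<alpha> u) \<theta>1 \<theta>2 \<le> Delta (odd_window \<eta>) (\<lambda>u. \<epsilon> * \<alpha> u) \<theta>1 \<theta>2"
    using monotone_angle.Delta_odd_window_ge_Lambda[OF lift] by blast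
  have double: "(\<lambda>u. \<epsilon> * (\<epsilon> * \<alpha> u)) = \<alpha>" using \<epsilon> by auto
  note Delta = Delta_sign_flip[OF \<epsilon>, of "odd_window \<eta>" "\<lambda>u. \<epsilon> * \<alpha> u", unfolded double]
  note Lambda = Lambda_sign_flip[OF \<epsilon>, of "\<lambda>u. \<epsilon> * \<alpha> u", unfolded double]
  show ?thesis
  proof (intro exI[of _ "\<lambda>x. \<epsilon> * odd_window \<eta> x"] exI[of _ c] conjI allI impI)
    show "bv_on (\<lambda>x. \<epsilon> * odd_window \<eta> x) 0 (2*pi)"
      using bv_on_odd_window[OF \<eta>] by (rule bv_on_cmult)
    show "c * Lambda \<alpha> \<theta>1 \<theta>2 \<le> Delta (\<lambda>x. \<epsilon> * odd_window \<eta> x) \<alpha> \<theta>1 \<theta>2"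
      if "\<bar>\<theta>1 - \<theta>2\<bar> \<le> pi" for \<theta>1 \<theta>2
      unfolding Delta Lambda by (rule estimate[OF that])
  qed (simp_all add: \<open>0 < c\<close> odd_window_minus odd_window_periodic)
qed

end
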